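(* Let $(A,B,C,D)$ be an impedance passive linear system on Hilbert spaces $(U,X,U)$ and let $Q\in\mathcal{L}(U)$ satisfy $\operatorname{Re}Q\geq cI$ for some $c>0$. Then $I+DQ$ is boundedly invertible, and if we define $$A_Q=A-BQ(I+DQ)^{-1}C \ (D(A_Q)=D(A)),\quad B_Q=B(I+QD)^{-1},\quad C_Q=(I+DQ)^{-1}C,\quad D_Q=(I+DQ)^{-1}D,$$ then $(A_Q,B_Q,C_Q,D_Q)$ is an impedance passive linear system on $(U,X,U)$. Moreover, for all $\lambda\in\rho(A_Q)$ with $\operatorname{Re}\lambda\geq 0$, $$\|R(\lambda,A_Q)B_Q\|^2\leq c^{-1}\|R(\lambda,A_Q)\|,\qquad \|C_QR(\lambda,A_Q)\|^2\leq c^{-1}\|R(\lambda,A_Q)\|,\qquad \|C_QR(\lambda,A_Q)B_Q+D_Q\|\leq c^{-1}.$$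
   Context: $\operatorname{Re}T=\frac12(T+T^* )$ for bounded $T$; $R(\lambda,A)=(\lambda-A)^{-1}$. A tuple $(A,B,C,D)$ is an impedance passive linear system on $(U,X,U)$ (Hilbert spaces) if: $B\in\mathcal{L}(U,X)$, $C\in\mathcal{L}(X,U)$, $D\in\mathcal{L}(U)$; $A:D(A)\subset X\to X$ generates a $C_0$-semigroup on $X$; and $\operatorname{Re}\langle Ax+Bu,x\rangle_X\leq\operatorname{Re}\langle Cx+Du,u\rangle_U$ for all $x\in D(A)$, $u\in U$. *)

theory Defs
  imports "HOL-Analysis.Analysis"
begin

class complex_vector = real_vector +
  fixes scaleC :: "complex \<Rightarrow> 'a \<Rightarrow> 'a" (infixr \<open>*\<^sub>C\<close> 75)
  assumes scaleR_scaleC: "scaleR r = scaleC (complex_of_real r)"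
    and scaleC_add_right: "a *\<^sub>C (x + y) = a *\<^sub>C x + a *\<^sub>C y"
    and scaleC_add_left: "(a + b) *\<^sub>C x = a *\<^sub>C x + b *\<^sub>C x"
    and scaleC_scaleC: "a *\<^sub>C (b *\<^sub>C x) = (a * b) *\<^sub>C x"
    and scaleC_one: "1 *\<^sub>C x = x"

class complex_hilbert = complex_vector + real_inner + complete_space +
  assumes norm_scaleC: "norm (a *\<^sub>C x) = cmod a * norm x"

instantiation complex :: complex_vector
begin
definition scaleC_complex :: "complex \<Rightarrow> complex \<Rightarrow> complex" where "scaleC_complex a x = a * x"
instance by standard (auto simp: scaleC_complex_def scaleR_conv_of_real algebra_simps fun_eq_iff)
end

instance complex :: complex_hilbert
  by standard (simp add: scaleC_complex_def norm_mult)

definition bounded_clinear :: "('a::complex_hilbert \<Rightarrow> 'b::complex_hilbert) \<Rightarrow> bool" where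
  "bounded_clinear f \<longleftrightarrow> bounded_linear f \<and> (\<forall>a x. f (a *\<^sub>C x) = a *\<^sub>C f x)"

text \<open>Complex Hilbert spaces are modelled by the class complex_hilbert: the norm comes from the
  real inner product, which is the real part of the complex inner product
  (multiplication by i is an isometry, hence by polarisation the real inner
  product determines a unique compatible complex inner product).
  Thus Re <x,y> is written  inner x y.\<close>

definition c0_semigroup :: "(real \<Rightarrow> 'x::complex_hilbert \<Rightarrow> 'x) \<Rightarrow> bool" where
  "c0_semigroup T \<longleftrightarrow>
     (\<forall>t\<ge>0. bounded_clinear (T t)) \<and>
     T 0 = id \<and>
     (\<forall>s\<ge>0. \<forall>t\<ge>0. T (s + t) = T s \<circ> T t) \<and>
     (\<forall>x. ((\<lambda>t. T t x) \<longlongrightarrow> x) (at_right 0))"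

definition generates_c0 :: "'x::complex_hilbert set \<Rightarrow> ('x \<Rightarrow> 'x) \<Rightarrow> bool" where
  "generates_c0 DA A \<longleftrightarrow>
     (\<exists>T. c0_semigroup T \<and>
          DA = {x. \<exists>y. ((\<lambda>h. (1 / h) *\<^sub>R (T h x - x)) \<longlongrightarrow> y) (at_right 0)} \<and>
          (\<forall>x\<in>DA. ((\<lambda>h. (1 / h) *\<^sub>R (T h x - x)) \<longlongrightarrow> A x) (at_right 0)))"

definition impedance_passive ::
  "'x::complex_hilbert set \<Rightarrow> ('x \<Rightarrow> 'x) \<Rightarrow>
   ('u::complex_hilbert \<Rightarrow> 'x) \<Rightarrow> ('x \<Rightarrow> 'u) \<Rightarrow> ('u \<Rightarrow> 'u) \<Rightarrow> bool" where
  "impedance_passive DA A B C D \<longleftrightarrow>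
     bounded_clinear B \<and> bounded_clinear C \<and> bounded_clinear D \<and>
     generates_c0 DA A \<and>
     (\<forall>x\<in>DA. \<forall>u. inner (A x + B u) x \<le> inner (C x + D u) u)"

definition in_resolvent_set :: "'x::complex_hilbert set \<Rightarrow> ('x \<Rightarrow> 'x) \<Rightarrow> complex \<Rightarrow> bool" where
  "in_resolvent_set DA A lam \<longleftrightarrow>
     bij_betw (\<lambda>x. lam *\<^sub>C x - A x) DA UNIV \<and>
     bounded_clinear (the_inv_into DA (\<lambda>x. lam *\<^sub>C x - A x))"

definition resolvent :: "'x::complex_hilbert set \<Rightarrow> ('x \<Rightarrow> 'x) \<Rightarrow> complex \<Rightarrow> 'x \<Rightarrow> 'x" where
  "resolvent DA A lam = the_inv_into DA (\<lambda>x. lam *\<^sub>C x - A x)"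

definition boundedly_invertible :: "('u::complex_hilbert \<Rightarrow> 'u) \<Rightarrow> bool" where
  "boundedly_invertible T \<longleftrightarrow> bounded_clinear T \<and>
     (\<exists>S. bounded_clinear S \<and> S \<circ> T = id \<and> T \<circ> S = id)"

end

theory Submission
  imports Defs
begin

text \<open>Writing \<open>I + D Q = (Q\<^sup>-\<^sup>1 + D) Q\<close> with \<open>Q\<^sup>-\<^sup>1\<close> coercive and \<open>D\<close> accretive (passivity at
  \<open>x = 0\<close>) shows that \<open>I + D Q\<close> is invertible. \<open>A\<^sub>Q\<close> is a bounded perturbation of \<open>A\<close>, so it
  generates the semigroup given by the Dyson-Phillips series. Feeding the input
  \<open>v - Q y\<close>, \<open>y = C\<^sub>Q x + D\<^sub>Q v\<close>, into the open loop turns its passivity inequality into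
  \<open>Re\<langle>A\<^sub>Q x + B\<^sub>Q v, x\<rangle> + c \<parallel>y\<parallel>\<^sup>2 \<le> Re\<langle>y, v\<rangle>\<close>; evaluated at
  \<open>x = R(\<lambda>, A\<^sub>Q)(G + B\<^sub>Q v)\<close> with \<open>Re \<lambda> \<ge> 0\<close> and suitable \<open>G\<close> and \<open>v\<close>, this strict
  passivity yields the three resolvent estimates.\<close>

instance complex_hilbert \<subseteq> banach ..

section \<open>Complex Hilbert spaces\<close>

lemma scaleR_eq_scaleC: "r *\<^sub>R (x::'a::complex_vector) = complex_of_real r *\<^sub>C x"
  by (simp add: scaleR_scaleC)

lemma bounded_linear_scaleC: "bounded_linear (\<lambda>x::'a::complex_hilbert. a *\<^sub>C x)"
proof (rule bounded_linear_intro[where K="cmod a"])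
  show "a *\<^sub>C (x + y) = a *\<^sub>C x + a *\<^sub>C y" for x y :: 'a by (rule scaleC_add_right)
  show "a *\<^sub>C (r *\<^sub>R x) = r *\<^sub>R (a *\<^sub>C x)" for r and x :: 'a
    by (simp add: scaleR_eq_scaleC scaleC_scaleC mult.commute)
  show "norm (a *\<^sub>C x) \<le> norm x * cmod a" for x :: 'a by (simp add: norm_scaleC mult.commute)
qed

lemma scaleC_diff_right: "a *\<^sub>C (x - y::'a::complex_hilbert) = a *\<^sub>C x - a *\<^sub>C y"
  by (rule linear_diff[OF bounded_linear.linear[OF bounded_linear_scaleC]])

lemma scaleC_minus_right: "a *\<^sub>C (- x::'a::complex_hilbert) = - (a *\<^sub>C x)"
  by (rule linear_neg[OF bounded_linear.linear[OF bounded_linear_scaleC]])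

text \<open>Multiplication by \<open>\<i>\<close> is an isometry, so \<open>x\<close> and \<open>\<i> x\<close> are orthogonal for the real
  inner product by the parallelogram computation of \<open>\<parallel>x + \<i> x\<parallel>\<^sup>2\<close>.\<close>

lemma inner_scaleC_i_self: "inner (\<i> *\<^sub>C x) (x::'a::complex_hilbert) = 0"
proof -
  have "x + \<i> *\<^sub>C x = (1 + \<i>) *\<^sub>C x" by (simp add: scaleC_add_left scaleC_one)
  then have "(norm (x + \<i> *\<^sub>C x))^2 = 2 * (norm x)^2"
    by (simp add: norm_scaleC power_mult_distrib cmod_power2)
  moreover have "(norm (x + \<i> *\<^sub>C x))^2 = (norm x)^2 + 2 * inner (\<i> *\<^sub>C x) x + (norm (\<i> *\<^sub>C x))^2"
    by (simp add: power2_norm_eq_inner inner_add_left inner_add_right inner_commute)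
  moreover have "norm (\<i> *\<^sub>C x) = norm x" by (simp add: norm_scaleC)
  ultimately show ?thesis by simp
qed

lemma scaleC_Re_Im: "a *\<^sub>C (x::'a::complex_hilbert) = Re a *\<^sub>R x + Im a *\<^sub>R (\<i> *\<^sub>C x)"
proof -
  have "a = complex_of_real (Re a) + complex_of_real (Im a) * \<i>" by (simp add: complex_eq_iff)
  then have "a *\<^sub>C x = (complex_of_real (Re a) + complex_of_real (Im a) * \<i>) *\<^sub>C x"
    by (rule arg_cong)
  then show ?thesis by (simp add: scaleC_add_left scaleR_eq_scaleC scaleC_scaleC)
qed

lemma inner_scaleC_left_self: "inner (a *\<^sub>C x) (x::'a::complex_hilbert) = Re a * inner x x"
  by (subst scaleC_Re_Im) (simp add: inner_add_left inner_scaleC_i_self)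

lemma bounded_clinear_imp_bounded_linear: "bounded_clinear f \<Longrightarrow> bounded_linear f"
  unfolding bounded_clinear_def by blast

lemma bounded_clinear_imp_linear: "bounded_clinear f \<Longrightarrow> linear f"
  unfolding bounded_clinear_def by (blast intro: bounded_linear.linear)

lemma bounded_clinear_scaleC: "bounded_clinear f \<Longrightarrow> f (a *\<^sub>C x) = a *\<^sub>C f x"
  unfolding bounded_clinear_def by blast

lemma bounded_clinear_compose:
  "bounded_clinear f \<Longrightarrow> bounded_clinear g \<Longrightarrow> bounded_clinear (\<lambda>x. f (g x))"
  unfolding bounded_clinear_def using bounded_linear_compose by metis

lemma bounded_clinear_ident: "bounded_clinear (\<lambda>x::'a::complex_hilbert. x)"
  unfolding bounded_clinear_def by simp

lemma bounded_clinear_add: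
  "bounded_clinear f \<Longrightarrow> bounded_clinear g \<Longrightarrow> bounded_clinear (\<lambda>x. f x + g x)"
  unfolding bounded_clinear_def by (simp add: bounded_linear_add scaleC_add_right)

lemma bounded_clinear_sub:
  "bounded_clinear f \<Longrightarrow> bounded_clinear g \<Longrightarrow> bounded_clinear (\<lambda>x. f x - g x)"
  unfolding bounded_clinear_def by (simp add: bounded_linear_sub scaleC_diff_right)

lemma bounded_clinear_minus: "bounded_clinear f \<Longrightarrow> bounded_clinear (\<lambda>x. - f x)"
  unfolding bounded_clinear_def by (simp add: bounded_linear_minus scaleC_minus_right)

lemma bounded_clinear_inv:
  fixes F :: "'a::complex_hilbert \<Rightarrow> 'a"
  assumes F: "bounded_clinear F" and bij: "bij F" and k: "k > 0"
    and below: "\<And>x. k * norm x \<le> norm (F x)"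
  shows "bounded_clinear (inv F)"
proof -
  have FG: "F (inv F y) = y" for y using bij by (simp add: bij_is_surj surj_f_inv_f)
  have GF: "inv F (F x) = x" for x using bij by (simp add: bij_is_inj)
  have add: "inv F (x + y) = inv F x + inv F y" for x y
    using GF[of "inv F x + inv F y"]
    by (simp add: linear_add[OF bounded_clinear_imp_linear[OF F]] FG)
  have scaleC: "inv F (a *\<^sub>C x) = a *\<^sub>C inv F x" for a x
    using GF[of "a *\<^sub>C inv F x"] by (simp add: bounded_clinear_scaleC[OF F] FG)
  have "bounded_linear (inv F)"
  proof (rule bounded_linear_intro[where K="1 / k"])
    show "inv F (x + y) = inv F x + inv F y" for x y by (rule add)
    show "inv F (r *\<^sub>R x) = r *\<^sub>R inv F x" for r x by (simp add: scaleR_eq_scaleC scaleC)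
    show "norm (inv F y) \<le> norm y * (1 / k)" for y
      using below[of "inv F y"] k by (simp add: FG field_simps)
  qed
  then show ?thesis unfolding bounded_clinear_def using scaleC by blast
qed

section \<open>Coercive operators\<close>

lemma le_divide_if_mult_square_le:
  fixes a b c :: real
  assumes "0 < c" and "0 \<le> a" and "0 \<le> b" and "c * a^2 \<le> a * b"
  shows "a \<le> b / c"
proof (cases "a = 0")
  case True then show ?thesis using assms by simp
next
  case False
  then have "c * a \<le> b" using assms by (simp add: power2_eq_square mult_ac)
  then show ?thesis using assms by (simp add: field_simps)
qed

lemma coercive_imp_bounded_below:
  fixes F :: "'a::real_inner \<Rightarrow> 'a"
  assumes c: "c > 0" and coercive: "c * inner x x \<le> inner (F x) x"
  shows "c * norm x \<le> norm (F x)"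
proof -
  have "c * (norm x)^2 \<le> norm x * norm (F x)"
    using coercive norm_cauchy_schwarz[of "F x" x] by (simp add: power2_norm_eq_inner mult.commute)
  then have "norm x \<le> norm (F x) / c" by (intro le_divide_if_mult_square_le c) auto
  then show ?thesis using c by (simp add: field_simps)
qed

lemma norm_sub_scaled_coercive_le:
  fixes F :: "'a::real_inner \<Rightarrow> 'a"
  assumes k: "k > 0" and coercive: "\<And>x. k * inner x x \<le> inner (F x) x"
    and M: "M > 0" "\<And>x. norm (F x) \<le> norm x * M"
  shows "(norm (z - (k / M^2) *\<^sub>R F z))^2 \<le> (1 - k^2 / M^2) * (norm z)^2"
proof -
  define e where "e = k / M^2"
  have "(norm (z - e *\<^sub>R F z))^2 = (norm z)^2 - 2 * e * inner (F z) z + e^2 * (norm (F z))^2"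
    unfolding power2_norm_eq_inner
    by (simp add: inner_diff_left inner_diff_right inner_commute[of z "F z"]
        power2_eq_square algebra_simps)
  also have "\<dots> \<le> (norm z)^2 - 2 * e * (k * (norm z)^2) + e^2 * (M * norm z)^2"
  proof -
    have "2 * e * (k * (norm z)^2) \<le> 2 * e * inner (F z) z"
      using mult_left_mono[OF coercive[of z], of "2 * e"] k M
      by (simp add: e_def power2_norm_eq_inner)
    moreover have "e^2 * (norm (F z))^2 \<le> e^2 * (M * norm z)^2"
      using M(2)[of z] by (intro mult_left_mono power_mono) (auto simp: mult.commute)
    ultimately show ?thesis by linarith
  qed
  also have "\<dots> = (1 - k^2 / M^2) * (norm z)^2"
    using M by (simp add: e_def power2_eq_square power_mult_distrib field_simps)
  finally show ?thesis by (simp add: e_def)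
qed

text \<open>A coercive operator is bijective: for \<open>e = k / M\<^sup>2\<close> the map \<open>x \<mapsto> x - e (F x - y)\<close> is a
  contraction, and its fixed point solves \<open>F x = y\<close>.\<close>

lemma bij_if_coercive:
  fixes F :: "'a::{real_inner, complete_space} \<Rightarrow> 'a"
  assumes F: "bounded_linear F" and k: "k > 0" and coercive: "\<And>x. k * inner x x \<le> inner (F x) x"
  shows "bij F"
proof (rule bijI)
  interpret F: bounded_linear F by (rule F)
  show "inj F"
  proof (rule injI)
    fix x y assume "F x = F y"
    moreover have "k * norm (x - y) \<le> norm (F (x - y))"
      using coercive_imp_bounded_below[where F = F, OF k coercive] .
    ultimately have "k * norm (x - y) \<le> 0" by (simp add: F.diff)
    then show "x = y" using k by (simp add: mult_le_0_iff)
  qed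
  obtain M where M: "M > 0" "\<And>x. norm (F x) \<le> norm x * M" using F.pos_bounded by blast
  define e where "e = k / M^2"
  define q where "q = sqrt (max 0 (1 - k^2 / M^2))"
  have e: "e > 0" using k M by (simp add: e_def)
  have q: "0 \<le> q" "q < 1" using k M by (auto simp: q_def)
  have contraction: "norm (z - e *\<^sub>R F z) \<le> q * norm z" for z
  proof (rule power2_le_imp_le)
    have "(1 - k^2 / M^2) * (norm z)^2 \<le> (q * norm z)^2"
      by (simp add: q_def power_mult_distrib mult_right_mono)
    then show "(norm (z - e *\<^sub>R F z))^2 \<le> (q * norm z)^2"
      using norm_sub_scaled_coercive_le[OF k coercive M, of z] by (simp add: e_def)
  qed (use q in simp)
  show "surj F"
  proof (rule surjI)
    fix y
    define f where "f x = x - e *\<^sub>R (F x - y)" for x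
    have "dist (f x) (f z) \<le> q * dist x z" for x z
    proof -
      have "f x - f z = (x - z) - e *\<^sub>R F (x - z)"
        by (simp add: f_def F.diff algebra_simps)
      then show ?thesis using contraction[of "x - z"] by (simp add: dist_norm)
    qed
    then obtain x where "f x = x" using banach_fix_type[OF q] by blast
    then have "F x = y" using e by (simp add: f_def)
    then show "F (SOME x. F x = y) = y" by (rule someI)
  qed
qed

section \<open>Strongly continuous semigroups\<close>

lemma linear_bound_if_bounded_on_ball:
  fixes f :: "'a::real_normed_vector \<Rightarrow> 'b::real_normed_vector"
  assumes f: "linear f" and r: "r > 0" and small: "\<And>y. norm y < r \<Longrightarrow> norm (f y) \<le> c"
  shows "norm (f x) \<le> (2 * c / r) * norm x"
proof (cases "x = 0")
  case True then show ?thesis by (simp add: linear_0[OF f])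
next
  case False
  define a where "a = r / (2 * norm x)"
  have a: "a > 0" using False r by (simp add: a_def)
  have "a * norm (f x) = norm (f (a *\<^sub>R x))" using a by (simp add: linear_scale[OF f])
  also have "\<dots> \<le> c" using False r by (intro small) (simp add: a_def)
  finally have "norm (f x) \<le> c / a" using a by (simp add: field_simps)
  also have "c / a = (2 * c / r) * norm x" using False r by (simp add: a_def field_simps)
  finally show ?thesis .
qed

lemma Baire_closed_cover:
  fixes E :: "nat \<Rightarrow> 'a::complete_space set"
  assumes "\<And>n. closed (E n)" and "\<Union>(range E) = UNIV"
  shows "\<exists>n. interior (E n) \<noteq> {}"
proof (rule ccontr)
  assume "\<not> ?thesis"
  then have "euclidean interior_of \<Union>(range E) = {}"
  proof (intro Baire_category_alt)
    show "completely_metrizable_space (euclidean::'a topology) \<or>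
        locally_compact_space (euclidean::'a topology) \<and> regular_space (euclidean::'a topology)"
      using completely_metrizable_space_euclidean by blast
  qed (use assms closed_closedin in auto)
  then show False using assms by simp
qed

text \<open>The uniform boundedness argument: the closed sets of vectors whose orbit stays below \<open>n\<close>
  on \<open>[0, 1/(n+1)]\<close> cover the space, so by Baire one of them contains a ball.\<close>

lemma uniformly_bounded_near_0_if_pointwise:
  fixes F :: "real \<Rightarrow> 'a::banach \<Rightarrow> 'b::real_normed_vector"
  assumes lin: "\<And>t. t \<ge> 0 \<Longrightarrow> bounded_linear (F t)"
    and pointwise: "\<And>x. \<exists>d>0. \<exists>m. \<forall>t\<in>{0..d}. norm (F t x) \<le> m"
  shows "\<exists>d>0. \<exists>M. \<forall>t\<in>{0..d}. \<forall>x. norm (F t x) \<le> M * norm x"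
proof -
  define E where "E n = {x. \<forall>t\<in>{0..1 / real (Suc n)}. norm (F t x) \<le> real n}" for n
  have closed: "closed (E n)" for n
  proof -
    have "E n = (\<Inter>t\<in>{0..1 / real (Suc n)}. {x. norm (F t x) \<le> real n})"
      by (auto simp: E_def)
    moreover have "closed {x. norm (F t x) \<le> real n}" if "t \<in> {0..1 / real (Suc n)}" for t
    proof -
      have "continuous_on UNIV (\<lambda>x. norm (F t x))"
        using that lin[of t] by (intro continuous_on_norm linear_continuous_on) auto
      then show ?thesis using closed_Collect_le[of "\<lambda>x. norm (F t x)" "\<lambda>x. real n"] by simp
    qed
    ultimately show ?thesis by (simp add: closed_INT)
  qed
  have cover: "\<Union>(range E) = UNIV"
  proof (intro set_eqI iffI)
    fix x
    obtain d m where dm: "d > 0" "\<forall>t\<in>{0..d}. norm (F t x) \<le> m"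
      using pointwise by blast
    obtain n :: nat where n: "max m (1 / d) \<le> real n" using real_arch_simple by blast
    have "1 / real (Suc n) \<le> d"
      using n dm(1) by (simp add: field_simps)
    then have "norm (F t x) \<le> real n" if "t \<in> {0..1 / real (Suc n)}" for t
      using dm(2) n that by force
    then have "x \<in> E n" by (simp add: E_def)
    then show "x \<in> \<Union>(range E)" by blast
  qed simp
  obtain n x0 where "x0 \<in> interior (E n)" using Baire_closed_cover[OF closed cover] by blast
  then obtain r where r: "r > 0" "ball x0 r \<subseteq> E n" by (meson mem_interior)
  have "norm (F t y) \<le> 2 * real n" if t: "t \<in> {0..1 / real (Suc n)}" and y: "norm y < r" for t y
  proof -
    have "x0 + y \<in> E n" "x0 \<in> E n" using r y by (auto simp: dist_norm)
    then have "norm (F t (x0 + y)) \<le> real n" "norm (F t x0) \<le> real n"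
      using t by (auto simp: E_def)
    moreover have "F t y = F t (x0 + y) - F t x0"
      using t lin[of t] by (simp add: linear_add bounded_linear.linear)
    ultimately show ?thesis by (metis norm_triangle_ineq4 order_trans add_mono mult_2)
  qed
  then have "norm (F t x) \<le> (2 * (2 * real n) / r) * norm x" if "t \<in> {0..1 / real (Suc n)}" for t x
    using that lin[of t] r(1) by (intro linear_bound_if_bounded_on_ball bounded_linear.linear) auto
  moreover have "1 / real (Suc n) > 0" by simp
  ultimately show ?thesis by blast
qed

locale strongly_continuous_semigroup =
  fixes T :: "real \<Rightarrow> 'x::complex_hilbert \<Rightarrow> 'x"
  assumes c0_semigroup: "c0_semigroup T"
begin

lemma bounded_clinear_T: "t \<ge> 0 \<Longrightarrow> bounded_clinear (T t)"
  using c0_semigroup unfolding c0_semigroup_def by blast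

lemma bounded_linear_T: "t \<ge> 0 \<Longrightarrow> bounded_linear (T t)"
  using bounded_clinear_T bounded_clinear_imp_bounded_linear by blast

lemma linear_T: "t \<ge> 0 \<Longrightarrow> linear (T t)"
  using bounded_clinear_T bounded_clinear_imp_linear by blast

lemma T_0 [simp]: "T 0 x = x"
  using c0_semigroup unfolding c0_semigroup_def by simp

lemma T_semigroup: "s \<ge> 0 \<Longrightarrow> t \<ge> 0 \<Longrightarrow> T (s + t) x = T s (T t x)"
  using c0_semigroup unfolding c0_semigroup_def by (metis comp_apply)

lemma T_tendsto_id: "((\<lambda>t. T t x) \<longlongrightarrow> x) (at_right 0)"
  using c0_semigroup unfolding c0_semigroup_def by blast

lemma T_add: "t \<ge> 0 \<Longrightarrow> T t (x + y) = T t x + T t y"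
  by (rule linear_add[OF linear_T])

lemma T_diff: "t \<ge> 0 \<Longrightarrow> T t (x - y) = T t x - T t y"
  by (rule linear_diff[OF linear_T])

lemma T_zero: "t \<ge> 0 \<Longrightarrow> T t 0 = 0"
  by (rule linear_0[OF linear_T])

lemma T_scaleC: "t \<ge> 0 \<Longrightarrow> T t (a *\<^sub>C x) = a *\<^sub>C T t x"
  using bounded_clinear_T bounded_clinear_scaleC by blast

lemma orbit_bounded_near_0: "\<exists>d>0. \<exists>m. \<forall>t\<in>{0..d}. norm (T t x) \<le> m"
proof -
  obtain b where b: "b > 0" "\<And>t. t > 0 \<Longrightarrow> t < b \<Longrightarrow> dist (T t x) x < 1"
    using tendstoD[OF T_tendsto_id, of 1] by (auto simp: eventually_at_right_field)
  have "norm (T t x) \<le> norm x + 1" if "t \<in> {0..b/2}" for t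
  proof (cases "t = 0")
    case False
    with that b have "dist (T t x) x < 1" by auto
    moreover have "norm (T t x) \<le> norm x + dist (T t x) x"
      by (metis add.commute dist_commute dist_norm norm_triangle_sub)
    ultimately show ?thesis by linarith
  qed simp
  moreover have "b / 2 > 0" using b by simp
  ultimately show ?thesis by blast
qed

lemma T_bounded_on_multiples:
  assumes d: "d > 0" and M: "M \<ge> 1" and bound: "\<forall>t\<in>{0..d}. \<forall>x. norm (T t x) \<le> M * norm x"
  shows "\<forall>t\<in>{0..real n * d}. \<forall>x. norm (T t x) \<le> M ^ Suc n * norm x"
proof (induction n)
  case 0
  show ?case using M by (auto simp: mult_le_cancel_right1)
next
  case (Suc n)
  show ?case
  proof (intro ballI allI)
    fix t x assume t: "t \<in> {0..real (Suc n) * d}"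
    show "norm (T t x) \<le> M ^ Suc (Suc n) * norm x"
    proof (cases "t \<le> d")
      case True
      have "M \<le> M ^ Suc (Suc n)" using M power_increasing[of 1 "Suc (Suc n)" M] by simp
      then have "M * norm x \<le> M ^ Suc (Suc n) * norm x" by (intro mult_right_mono) auto
      moreover have "norm (T t x) \<le> M * norm x" using bound t True by simp
      ultimately show ?thesis by linarith
    next
      case False
      then have "t - d \<in> {0..real n * d}" using t by (simp add: distrib_right)
      moreover have "T t x = T d (T (t - d) x)" using T_semigroup[of d "t - d" x] d False by simp
      ultimately have "norm (T t x) \<le> M * norm (T (t - d) x)" using bound d by simp
      also have "\<dots> \<le> M * (M ^ Suc n * norm x)"
        using Suc.IH \<open>t - d \<in> {0..real n * d}\<close> M by (intro mult_left_mono) auto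
      finally show ?thesis by simp
    qed
  qed
qed

lemma T_bounded_on_interval: "\<exists>K\<ge>1. \<forall>t\<in>{0..\<tau>}. \<forall>x. norm (T t x) \<le> K * norm x"
proof -
  obtain d M where d: "d > 0" and M: "\<forall>t\<in>{0..d}. \<forall>x. norm (T t x) \<le> M * norm x"
    using uniformly_bounded_near_0_if_pointwise[OF bounded_linear_T orbit_bounded_near_0] by blast
  have M': "\<forall>t\<in>{0..d}. \<forall>x. norm (T t x) \<le> max 1 M * norm x"
    using M by (smt (verit) mult_right_mono norm_ge_zero)
  obtain n :: nat where "\<tau> / d \<le> real n" using real_arch_simple by blast
  then have "\<tau> \<le> real n * d" using d by (simp add: field_simps)
  then have "\<forall>t\<in>{0..\<tau>}. \<forall>x. norm (T t x) \<le> max 1 M ^ Suc n * norm x"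
    using T_bounded_on_multiples[OF d _ M', of n] by auto
  moreover have "max 1 M ^ Suc n \<ge> 1" by (intro one_le_power) simp
  ultimately show ?thesis by blast
qed

lemma continuous_on_orbit: "continuous_on {0..} (\<lambda>t. T t x)"
  unfolding continuous_on_iff
proof (intro ballI allI impI)
  fix t0 e :: real
  assume t0: "t0 \<in> {0..}" and e: "e > 0"
  obtain K where K: "K \<ge> 1" "\<forall>t\<in>{0..t0+1}. \<forall>x. norm (T t x) \<le> K * norm x"
    using T_bounded_on_interval by blast
  obtain b where b: "b > 0" "\<And>h. h > 0 \<Longrightarrow> h < b \<Longrightarrow> dist (T h x) x < e / K"
    using tendstoD[OF T_tendsto_id[of x], of "e / K"] e K by (auto simp: eventually_at_right_field)
  have step: "norm (T t x - T s x) < e" if "0 \<le> s" "s \<le> t" "t \<le> t0 + 1" "t - s < b" for s t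
  proof -
    have "T t x - T s x = T s (T (t - s) x - x)"
      using T_semigroup[of s "t - s" x] that by (simp add: T_diff)
    then have "norm (T t x - T s x) \<le> K * norm (T (t - s) x - x)" using K that by auto
    also have "\<dots> < e"
    proof (cases "s = t")
      case False
      then have "norm (T (t - s) x - x) < e / K" using b that by (simp add: dist_norm)
      then show ?thesis using K(1) by (simp add: field_simps)
    qed (use e in simp)
    finally show ?thesis .
  qed
  show "\<exists>d>0. \<forall>t\<in>{0..}. dist t t0 < d \<longrightarrow> dist (T t x) (T t0 x) < e"
  proof (intro exI[of _ "min 1 b"] conjI ballI impI)
    fix t :: real assume t: "t \<in> {0..}" and d: "dist t t0 < min 1 b"
    show "dist (T t x) (T t0 x) < e"
    proof (cases "t0 \<le> t")
      case True
      then show ?thesis using step[of t0 t] t0 d by (auto simp: dist_norm dist_real_def)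
    next
      case False
      then show ?thesis using step[of t t0] t d by (auto simp: dist_norm dist_real_def
          norm_minus_commute)
    qed
  qed (use b in simp)
qed

lemma continuous_on_orbit_joint:
  assumes v: "continuous_on {0..\<tau>} v"
  shows "continuous_on ({0..\<tau>} \<times> {0..\<tau>}) (\<lambda>p. T (fst p) (v (snd p)))"
  unfolding continuous_on_iff
proof (intro ballI allI impI)
  fix p0 :: "real \<times> real" and e :: real
  assume p0: "p0 \<in> {0..\<tau>} \<times> {0..\<tau>}" and e: "e > 0"
  obtain h0 s0 where p0_eq: "p0 = (h0, s0)" and h0: "h0 \<in> {0..\<tau>}" and s0: "s0 \<in> {0..\<tau>}"
    using p0 by auto
  obtain K where K: "K \<ge> 1" "\<forall>t\<in>{0..\<tau>}. \<forall>x. norm (T t x) \<le> K * norm x"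
    using T_bounded_on_interval by blast
  have h0': "h0 \<in> {0..}" and e2: "e / 2 > 0" and eK: "e / (2 * K) > 0" using h0 e K(1) by auto
  obtain d1 where d1: "d1 > 0"
    "\<forall>h\<in>{0..}. dist h h0 < d1 \<longrightarrow> dist (T h (v s0)) (T h0 (v s0)) < e / 2"
    using continuous_on_orbit[of "v s0", unfolded continuous_on_iff, rule_format, OF h0' e2]
    by blast
  obtain d2 where d2: "d2 > 0" "\<forall>s\<in>{0..\<tau>}. dist s s0 < d2 \<longrightarrow> dist (v s) (v s0) < e / (2 * K)"
    using v[unfolded continuous_on_iff, rule_format, OF s0 eK] by blast
  have close: "dist (T h (v s)) (T h0 (v s0)) < e"
    if h: "h \<in> {0..\<tau>}" and s: "s \<in> {0..\<tau>}" and "dist h h0 < d1" "dist s s0 < d2" for h s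
  proof -
    have "T h (v s) - T h0 (v s0) = T h (v s - v s0) + (T h (v s0) - T h0 (v s0))"
      using h by (simp add: T_diff)
    then have "dist (T h (v s)) (T h0 (v s0))
        \<le> norm (T h (v s - v s0)) + dist (T h (v s0)) (T h0 (v s0))"
      by (metis dist_norm norm_triangle_ineq)
    also have "norm (T h (v s - v s0)) \<le> K * norm (v s - v s0)" using K(2) h by blast
    also have "K * norm (v s - v s0) < K * (e / (2 * K))"
      using d2 s that(4) K(1) by (intro mult_strict_left_mono) (auto simp: dist_norm)
    also have "dist (T h (v s0)) (T h0 (v s0)) < e / 2" using d1 h that(3) by auto
    finally show ?thesis using K(1) by simp
  qed
  show "\<exists>d>0. \<forall>p\<in>{0..\<tau>} \<times> {0..\<tau>}. dist p p0 < d \<longrightarrow>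
      dist (T (fst p) (v (snd p))) (T (fst p0) (v (snd p0))) < e"
  proof (intro exI[of _ "min d1 d2"] conjI ballI impI)
    fix p assume "p \<in> {0..\<tau>} \<times> {0..\<tau>}" and "dist p p0 < min d1 d2"
    moreover have "dist (fst p) h0 \<le> dist p p0" "dist (snd p) s0 \<le> dist p p0"
      using dist_fst_le[of p p0] dist_snd_le[of p p0] p0_eq by simp_all
    ultimately show "dist (T (fst p) (v (snd p))) (T (fst p0) (v (snd p0))) < e"
      using close[of "fst p" "snd p"] p0_eq by auto
  qed (use d1 d2 in simp)
qed

end

section \<open>Bounded perturbations of generators\<close>

lemma has_integral_power_div_fact:
  assumes t: "0 \<le> t"
  shows "((\<lambda>s::real. s ^ n / fact n) has_integral t ^ Suc n / fact (Suc n)) {0..t}"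
proof -
  have "((\<lambda>s. s ^ Suc n / fact (Suc n)) has_real_derivative real (Suc n) * x ^ n / fact (Suc n))
      (at x within {0..t})" for x :: real
    by (intro DERIV_cdivide) (use DERIV_pow[of "Suc n" x] in simp)
  moreover have "real (Suc n) * x ^ n / fact (Suc n) = x ^ n / fact n" for x :: real
    by (simp add: fact_Suc del: of_nat_Suc)
  ultimately have "((\<lambda>s. s ^ Suc n / fact (Suc n)) has_vector_derivative x ^ n / fact n)
      (at x within {0..t})" for x :: real
    by (simp add: has_real_derivative_iff_has_vector_derivative)
  from fundamental_theorem_of_calculus[OF t this] show ?thesis by simp
qed

lemma continuous_on_atLeast_if_Icc:
  fixes f :: "real \<Rightarrow> 'a::metric_space"
  assumes "\<And>\<tau>. continuous_on {0..\<tau>} f"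
  shows "continuous_on {0..} f"
  unfolding continuous_on_iff
proof (intro ballI allI impI)
  fix t0 e :: real assume t0: "t0 \<in> {0..}" and e: "e > 0"
  have t0': "t0 \<in> {0..t0+1}" using t0 by simp
  obtain d where d: "d > 0" "\<forall>t\<in>{0..t0+1}. dist t t0 < d \<longrightarrow> dist (f t) (f t0) < e"
    using assms[of "t0 + 1", unfolded continuous_on_iff, rule_format, OF t0' e] by blast
  show "\<exists>d>0. \<forall>t\<in>{0..}. dist t t0 < d \<longrightarrow> dist (f t) (f t0) < e"
  proof (intro exI[of _ "min d 1"] conjI ballI impI)
    show "min d 1 > 0" using d by simp
    fix t :: real assume t: "t \<in> {0..}" and dt: "dist t t0 < min d 1"
    then have "t \<in> {0..t0+1}" by (auto simp: dist_real_def)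
    then show "dist (f t) (f t0) < e" using d dt by auto
  qed
qed

lemma summable_power_div_fact: "summable (\<lambda>n. (y::real) ^ n / fact n)"
  using summable_exp[of y] by (simp add: divide_inverse mult.commute)

lemma sums_power_div_fact: "(\<lambda>n. (y::real) ^ n / fact n) sums exp y"
  using exp_converges[of y] by (simp add: divide_inverse mult.commute)

locale bounded_perturbation = strongly_continuous_semigroup T
  for T :: "real \<Rightarrow> 'x::complex_hilbert \<Rightarrow> 'x" +
  fixes P :: "'x \<Rightarrow> 'x"
  assumes bounded_clinear_P: "bounded_clinear P"
begin

lemma bounded_linear_P: "bounded_linear P"
  using bounded_clinear_P bounded_clinear_imp_bounded_linear by blast

lemma P_add: "P (x + y) = P x + P y"
  by (rule linear_add[OF bounded_linear.linear[OF bounded_linear_P]])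

lemma P_diff: "P (x - y) = P x - P y"
  by (rule linear_diff[OF bounded_linear.linear[OF bounded_linear_P]])

lemma P_zero: "P 0 = 0"
  by (rule linear_0[OF bounded_linear.linear[OF bounded_linear_P]])

lemma P_scaleC: "P (a *\<^sub>C x) = a *\<^sub>C P x"
  by (rule bounded_clinear_scaleC[OF bounded_clinear_P])

lemma norm_P_le: "norm (P x) \<le> onorm P * norm x"
  by (rule onorm[OF bounded_linear_P])

lemma onorm_P_nonneg: "0 \<le> onorm P"
  by (rule onorm_pos_le[OF bounded_linear_P])

definition duhamel :: "(real \<Rightarrow> 'x) \<Rightarrow> real \<Rightarrow> 'x" where
  "duhamel g t = integral {0..t} (\<lambda>s. T (t - s) (P (g s)))"

lemma continuous_on_P_comp:
  assumes g: "continuous_on {0..} g"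
  shows "continuous_on {0..\<tau>} (\<lambda>s. P (g s))"
proof -
  have "continuous_on {0..\<tau>} g" using g by (rule continuous_on_subset) auto
  from continuous_on_compose2[OF linear_continuous_on[OF bounded_linear_P, of UNIV] this]
  show ?thesis by simp
qed

lemma continuous_on_duhamel_integrand:
  assumes g: "continuous_on {0..} g" and t: "0 \<le> t"
  shows "continuous_on {0..t} (\<lambda>s. T (t - s) (P (g s)))"
proof -
  have J: "continuous_on ({0..t} \<times> {0..t}) (\<lambda>p. T (fst p) (P (g (snd p))))"
    using continuous_on_orbit_joint[OF continuous_on_P_comp[OF g, of t]] by simp
  have c: "continuous_on {0..t} (\<lambda>s. (t - s, s))" by (intro continuous_intros)
  have "(\<lambda>s. (t - s, s)) ` {0..t} \<subseteq> {0..t} \<times> {0..t}" by auto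
  from continuous_on_compose2[OF J c this] show ?thesis by simp
qed

lemma duhamel_integrand_integrable:
  assumes g: "continuous_on {0..} g" and t: "0 \<le> t"
  shows "(\<lambda>s. T (t - s) (P (g s))) integrable_on {0..t}"
  by (rule integrable_continuous_real[OF continuous_on_duhamel_integrand[OF g t]])

lemma norm_duhamel_le_monomial:
  assumes g: "continuous_on {0..} g" and t: "0 \<le> t"
    and K: "\<forall>s\<in>{0..t}. \<forall>x. norm (T s x) \<le> K * norm x" and K0: "0 \<le> K"
    and g_le: "\<forall>s\<in>{0..t}. norm (g s) \<le> c * s ^ n / fact n"
  shows "norm (duhamel g t) \<le> K * onorm P * c * t ^ Suc n / fact (Suc n)"
proof -
  have I: "((\<lambda>s. K * onorm P * c * (s ^ n / fact n)) has_integral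
      K * onorm P * c * (t ^ Suc n / fact (Suc n))) {0..t}"
    by (rule has_integral_mult_right[OF has_integral_power_div_fact[OF t]])
  have "norm (duhamel g t) \<le> integral {0..t} (\<lambda>s. K * onorm P * c * (s ^ n / fact n))"
    unfolding duhamel_def
  proof (rule integral_norm_bound_integral[OF duhamel_integrand_integrable[OF g t]])
    show "(\<lambda>s. K * onorm P * c * (s ^ n / fact n)) integrable_on {0..t}" using I by blast
    fix s assume s: "s \<in> {0..t}"
    have "norm (T (t - s) (P (g s))) \<le> K * norm (P (g s))" using K s by auto
    also have "\<dots> \<le> K * (onorm P * norm (g s))" by (rule mult_left_mono[OF norm_P_le K0])
    also have "\<dots> \<le> K * (onorm P * (c * s ^ n / fact n))"
      using g_le s K0 onorm_P_nonneg by (intro mult_left_mono) auto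
    finally show "norm (T (t - s) (P (g s))) \<le> K * onorm P * c * (s ^ n / fact n)"
      by (simp add: mult_ac)
  qed
  then show ?thesis using integral_unique[OF I] by simp
qed

lemma duhamel_add:
  assumes g1: "continuous_on {0..} g1" and g2: "continuous_on {0..} g2" and t: "0 \<le> t"
  shows "duhamel (\<lambda>s. g1 s + g2 s) t = duhamel g1 t + duhamel g2 t"
proof -
  have "duhamel (\<lambda>s. g1 s + g2 s) t =
      integral {0..t} (\<lambda>s. T (t - s) (P (g1 s)) + T (t - s) (P (g2 s)))"
    unfolding duhamel_def by (rule integral_cong) (simp add: P_add T_add)
  also have "\<dots> = duhamel g1 t + duhamel g2 t"
    unfolding duhamel_def by (rule integral_add[OF duhamel_integrand_integrable[OF g1 t]
        duhamel_integrand_integrable[OF g2 t]])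
  finally show ?thesis .
qed

lemma duhamel_diff:
  assumes g1: "continuous_on {0..} g1" and g2: "continuous_on {0..} g2" and t: "0 \<le> t"
  shows "duhamel (\<lambda>s. g1 s - g2 s) t = duhamel g1 t - duhamel g2 t"
proof -
  have "duhamel (\<lambda>s. g1 s - g2 s) t =
      integral {0..t} (\<lambda>s. T (t - s) (P (g1 s)) - T (t - s) (P (g2 s)))"
    unfolding duhamel_def by (rule integral_cong) (simp add: P_diff T_diff)
  also have "\<dots> = duhamel g1 t - duhamel g2 t"
    unfolding duhamel_def by (rule integral_diff[OF duhamel_integrand_integrable[OF g1 t]
        duhamel_integrand_integrable[OF g2 t]])
  finally show ?thesis .
qed

lemma duhamel_scaleC:
  assumes g: "continuous_on {0..} g" and t: "0 \<le> t"
  shows "duhamel (\<lambda>s. a *\<^sub>C g s) t = a *\<^sub>C duhamel g t"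
proof -
  have "duhamel (\<lambda>s. a *\<^sub>C g s) t = integral {0..t} ((\<lambda>x. a *\<^sub>C x) \<circ> (\<lambda>s. T (t - s) (P (g s))))"
    unfolding duhamel_def by (rule integral_cong) (simp add: P_scaleC T_scaleC)
  also have "\<dots> = a *\<^sub>C duhamel g t"
    unfolding duhamel_def by (rule integral_linear[OF duhamel_integrand_integrable[OF g t]
        bounded_linear_scaleC])
  finally show ?thesis .
qed

lemma duhamel_zero: "duhamel (\<lambda>s. 0) t = 0"
proof -
  have "duhamel (\<lambda>s. 0) t = integral {0..t} (\<lambda>s. 0::'x)"
    unfolding duhamel_def by (rule integral_cong) (simp add: P_zero T_zero)
  then show ?thesis by simp
qed

lemma duhamel_sum:
  fixes f :: "nat \<Rightarrow> real \<Rightarrow> 'x"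
  assumes f: "\<And>i. continuous_on {0..} (f i)" and t: "0 \<le> t"
  shows "duhamel (\<lambda>s. \<Sum>i<N. f i s) t = (\<Sum>i<N. duhamel (f i) t)"
proof (induction N)
  case 0 then show ?case by (simp add: duhamel_zero)
next
  case (Suc N)
  have c: "continuous_on {0..} (\<lambda>s. \<Sum>i<N. f i s)" by (intro continuous_on_sum f)
  have "duhamel (\<lambda>s. \<Sum>i<Suc N. f i s) t = duhamel (\<lambda>s. (\<Sum>i<N. f i s) + f N s) t" by simp
  also have "\<dots> = duhamel (\<lambda>s. \<Sum>i<N. f i s) t + duhamel (f N) t" by (rule duhamel_add[OF c f t])
  finally show ?case using Suc.IH by simp
qed

lemma duhamel_diff_eq:
  assumes g: "continuous_on {0..} g" and ab: "0 \<le> a" "a \<le> b"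
  shows "duhamel g b - duhamel g a =
    integral {0..a} (\<lambda>s. T (b - s) (P (g s)) - T (a - s) (P (g s))) +
    integral {a..b} (\<lambda>s. T (b - s) (P (g s)))"
proof -
  have ib: "(\<lambda>s. T (b - s) (P (g s))) integrable_on {0..b}"
    using ab by (intro duhamel_integrand_integrable[OF g]) simp
  then have ib': "(\<lambda>s. T (b - s) (P (g s))) integrable_on {0..a}"
    by (rule integrable_on_subinterval) (use ab in auto)
  have ia: "(\<lambda>s. T (a - s) (P (g s))) integrable_on {0..a}"
    by (rule duhamel_integrand_integrable[OF g ab(1)])
  show ?thesis
    unfolding duhamel_def integral_diff[OF ib' ia]
    using Henstock_Kurzweil_Integration.integral_combine[OF ab ib] by (simp add: algebra_simps)
qed

lemma norm_duhamel_diff_le: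
  assumes g: "continuous_on {0..} g" and ab: "0 \<le> a" "a \<le> b"
    and near: "\<And>s. s \<in> {0..a} \<Longrightarrow> norm (T (b - s) (P (g s)) - T (a - s) (P (g s))) \<le> \<epsilon>"
    and bound: "\<And>s. s \<in> {a..b} \<Longrightarrow> norm (T (b - s) (P (g s))) \<le> M"
  shows "norm (duhamel g b - duhamel g a) \<le> a * \<epsilon> + (b - a) * M"
proof -
  have ib: "(\<lambda>s. T (b - s) (P (g s))) integrable_on {0..b}"
    using ab by (intro duhamel_integrand_integrable[OF g]) simp
  have ib': "(\<lambda>s. T (b - s) (P (g s))) integrable_on {0..a}"
    by (rule integrable_on_subinterval[OF ib]) (use ab in auto)
  have ia: "(\<lambda>s. T (a - s) (P (g s))) integrable_on {0..a}"
    by (rule duhamel_integrand_integrable[OF g ab(1)])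
  have "norm (integral {0..a} (\<lambda>s. T (b - s) (P (g s)) - T (a - s) (P (g s)))) \<le> integral {0..a}
      (\<lambda>s. \<epsilon>)"
    by (rule integral_norm_bound_integral[OF integrable_diff[OF ib' ia] _ near]) auto
  moreover have "norm (integral {a..b} (\<lambda>s. T (b - s) (P (g s)))) \<le> integral {a..b} (\<lambda>s. M)"
  proof (rule integral_norm_bound_integral[OF _ _ bound])
    show "(\<lambda>s. T (b - s) (P (g s))) integrable_on {a..b}"
      by (rule integrable_on_subinterval[OF ib]) (use ab in auto)
  qed auto
  moreover have "integral {0..a} (\<lambda>s. \<epsilon>) = a * \<epsilon>" "integral {a..b} (\<lambda>s. M) = (b - a) * M"
    using ab by simp_all
  ultimately show ?thesis
    unfolding duhamel_diff_eq[OF g ab] by (smt (verit) norm_triangle_ineq)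
qed

lemma continuous_on_duhamel:
  assumes g: "continuous_on {0..} g"
  shows "continuous_on {0..} (duhamel g)"
proof (rule continuous_on_atLeast_if_Icc)
  fix \<tau> :: real
  show "continuous_on {0..\<tau>} (duhamel g)"
    unfolding continuous_on_iff
  proof (intro ballI allI impI)
    fix t0 e :: real assume t0: "t0 \<in> {0..\<tau>}" and e: "e > 0"
    define S where "S = {0..\<tau>} \<times> {0..\<tau>}"
    define H where "H p = T (fst p) (P (g (snd p)))" for p
    have H: "continuous_on S H"
      unfolding H_def S_def by (rule continuous_on_orbit_joint[OF continuous_on_P_comp[OF g]])
    have S: "compact S" unfolding S_def by (intro compact_Times compact_Icc)
    obtain M where M: "M > 0" "\<And>p. p \<in> S \<Longrightarrow> norm (H p) \<le> M"
      using compact_imp_bounded[OF compact_continuous_image[OF H S]] unfolding bounded_pos by auto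
    define \<epsilon> where "\<epsilon> = e / (2 * (\<tau> + 1))"
    have \<epsilon>: "\<epsilon> > 0" "\<tau> * \<epsilon> < e / 2" using e t0 by (auto simp: \<epsilon>_def field_simps)
    obtain d where d: "d > 0" "\<forall>p\<in>S. \<forall>p'\<in>S. dist p' p < d \<longrightarrow> dist (H p') (H p) < \<epsilon>"
      using compact_uniformly_continuous[OF H S, unfolded uniformly_continuous_on_def] \<epsilon>(1) by blast
    define \<delta> where "\<delta> = min d (e / (2 * M))"
    have close: "norm (duhamel g b - duhamel g a) < e"
      if ab: "0 \<le> a" "a \<le> b" "b \<le> \<tau>" "b - a < \<delta>" for a b
    proof -
      have "norm (duhamel g b - duhamel g a) \<le> a * \<epsilon> + (b - a) * M"
      proof (rule norm_duhamel_diff_le[OF g ab(1,2)])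
        fix s assume "s \<in> {0..a}"
        then have "dist (H (b - s, s)) (H (a - s, s)) < \<epsilon>"
          using ab by (intro d(2)[rule_format])
            (auto simp: S_def dist_Pair_Pair dist_real_def \<delta>_def)
        then show "norm (T (b - s) (P (g s)) - T (a - s) (P (g s))) \<le> \<epsilon>"
          by (simp add: H_def dist_norm)
      next
        fix s assume "s \<in> {a..b}"
        then show "norm (T (b - s) (P (g s))) \<le> M"
          using M(2)[of "(b - s, s)"] ab by (auto simp: H_def S_def)
      qed
      also have "a * \<epsilon> \<le> \<tau> * \<epsilon>" using ab \<epsilon> by (intro mult_right_mono) auto
      also have "(b - a) * M < e / 2 * M / M"
        using ab M by (simp add: \<delta>_def field_simps)
      finally show ?thesis using \<epsilon>(2) M by simp
    qed
    show "\<exists>\<delta>>0. \<forall>t\<in>{0..\<tau>}. dist t t0 < \<delta> \<longrightarrow> dist (duhamel g t) (duhamel g t0) < e"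
    proof (intro exI[of _ \<delta>] conjI ballI impI)
      fix t assume t: "t \<in> {0..\<tau>}" and "dist t t0 < \<delta>"
      then show "dist (duhamel g t) (duhamel g t0) < e"
        using close[of t t0] close[of t0 t] t0
        by (cases "t \<le> t0") (auto simp: dist_norm dist_real_def norm_minus_commute)
    qed (use d M e in \<open>simp add: \<delta>_def\<close>)
  qed
qed

lemma duhamel_cong: "(\<And>s. s \<in> {0..t} \<Longrightarrow> g1 s = g2 s) \<Longrightarrow> duhamel g1 t = duhamel g2 t"
  unfolding duhamel_def by (rule integral_cong) simp

fun dyson_phillips :: "nat \<Rightarrow> real \<Rightarrow> 'x \<Rightarrow> 'x" where
  "dyson_phillips 0 t x = T t x"
| "dyson_phillips (Suc n) t x = duhamel (\<lambda>s. dyson_phillips n s x) t"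

lemma continuous_on_dyson_phillips: "continuous_on {0..} (\<lambda>t. dyson_phillips n t x)"
proof (induction n)
  case 0 then show ?case using continuous_on_orbit by simp
next
  case (Suc n)
  from continuous_on_duhamel[OF Suc.IH] show ?case by simp
qed

lemma norm_dyson_phillips_le:
  assumes K: "\<forall>s\<in>{0..\<tau>}. \<forall>x. norm (T s x) \<le> K * norm x" and K0: "K \<ge> 0"
    and t: "t \<in> {0..\<tau>}"
  shows "norm (dyson_phillips n t x) \<le> (K ^ Suc n * onorm P ^ n * norm x) * t ^ n / fact n"
  using t
proof (induction n arbitrary: t)
  case 0 then show ?case using K by simp
next
  case (Suc n)
  have t0: "0 \<le> t" using Suc.prems by simp
  have Kt: "\<forall>s\<in>{0..t}. \<forall>x. norm (T s x) \<le> K * norm x" using K Suc.prems by auto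
  have gb: "\<forall>s\<in>{0..t}.
      norm (dyson_phillips n s x) \<le> (K ^ Suc n * onorm P ^ n * norm x) * s ^ n / fact n"
    using Suc.IH Suc.prems by auto
  have "norm (dyson_phillips (Suc n) t x)
      \<le> K * onorm P * (K ^ Suc n * onorm P ^ n * norm x) * t ^ Suc n / fact (Suc n)"
    unfolding dyson_phillips.simps
    by (rule norm_duhamel_le_monomial[OF continuous_on_dyson_phillips t0 Kt K0 gb])
  also have "\<dots> = (K ^ Suc (Suc n) * onorm P ^ Suc n * norm x) * t ^ Suc n / fact (Suc n)"
    by (simp add: mult_ac)
  finally show ?case .
qed

lemma norm_dyson_phillips_le_exp_term:
  assumes K: "\<forall>s\<in>{0..\<tau>}. \<forall>x. norm (T s x) \<le> K * norm x" and K0: "K \<ge> 0"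
    and t: "t \<in> {0..\<tau>}"
  shows "norm (dyson_phillips n t x) \<le> K * norm x * ((K * onorm P * \<tau>) ^ n / fact n)"
proof -
  have "norm (dyson_phillips n t x) \<le> (K ^ Suc n * onorm P ^ n * norm x) * t ^ n / fact n"
    by (rule norm_dyson_phillips_le[OF K K0 t])
  also have "\<dots> \<le> (K ^ Suc n * onorm P ^ n * norm x) * \<tau> ^ n / fact n"
  proof -
    have "t ^ n \<le> \<tau> ^ n" using t by (intro power_mono) auto
    moreover have "0 \<le> K ^ Suc n * onorm P ^ n * norm x" using K0 onorm_P_nonneg by simp
    ultimately show ?thesis by (intro divide_right_mono mult_left_mono) auto
  qed
  also have "\<dots> = K * norm x * ((K * onorm P * \<tau>) ^ n / fact n)"
    by (simp add: power_mult_distrib mult_ac)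
  finally show ?thesis .
qed

definition perturbed :: "real \<Rightarrow> 'x \<Rightarrow> 'x" where
  "perturbed t x = (\<Sum>n. dyson_phillips n t x)"

lemma uniform_limit_dyson_phillips:
  assumes K: "\<forall>s\<in>{0..\<tau>}. \<forall>x. norm (T s x) \<le> K * norm x" and K0: "K \<ge> 0"
  shows "uniform_limit {0..\<tau>} (\<lambda>N t. \<Sum>n<N. dyson_phillips n t x) (\<lambda>t. perturbed t x) sequentially"
  unfolding perturbed_def
proof (rule Weierstrass_m_test)
  fix n t assume t: "t \<in> {0..\<tau>}"
  show "norm (dyson_phillips n t x) \<le> K * norm x * ((K * onorm P * \<tau>) ^ n / fact n)"
    by (rule norm_dyson_phillips_le_exp_term[OF K K0 t])
next
  show "summable (\<lambda>n. K * norm x * ((K * onorm P * \<tau>) ^ n / fact n))"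
    by (intro summable_mult summable_power_div_fact)
qed

lemma summable_dyson_phillips:
  assumes t: "0 \<le> t"
  shows "summable (\<lambda>n. dyson_phillips n t x)"
proof -
  obtain K where K: "K \<ge> 1" "\<forall>s\<in>{0..t}. \<forall>x. norm (T s x) \<le> K * norm x"
    using T_bounded_on_interval by blast
  have tt: "t \<in> {0..t}" using t by simp
  show ?thesis
  proof (rule summable_comparison_test)
    show "\<exists>N. \<forall>n\<ge>N. norm (dyson_phillips n t x) \<le> K * norm x * ((K * onorm P * t) ^ n / fact n)"
      using norm_dyson_phillips_le_exp_term[OF K(2) _ tt] K(1) by auto
    show "summable (\<lambda>n. K * norm x * ((K * onorm P * t) ^ n / fact n))"
      by (intro summable_mult summable_power_div_fact)
  qed
qed

lemma continuous_on_perturbed: "continuous_on {0..} (\<lambda>t. perturbed t x)"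
proof (rule continuous_on_atLeast_if_Icc)
  fix \<tau> :: real
  obtain K where K: "K \<ge> 1" "\<forall>s\<in>{0..\<tau>}. \<forall>x. norm (T s x) \<le> K * norm x"
    using T_bounded_on_interval by blast
  have U: "uniform_limit {0..\<tau>} (\<lambda>N t. \<Sum>n<N. dyson_phillips n t x) (\<lambda>t. perturbed t x) sequentially"
    using uniform_limit_dyson_phillips[OF K(2)] K(1) by simp
  have C: "\<forall>\<^sub>F N in sequentially. continuous_on {0..\<tau>} (\<lambda>t. \<Sum>n<N. dyson_phillips n t x)"
  proof (rule always_eventually, rule allI)
    fix N
    have "continuous_on {0..\<tau>} (\<lambda>t. dyson_phillips n t x)" for n
      using continuous_on_dyson_phillips by (rule continuous_on_subset) auto
    then show "continuous_on {0..\<tau>} (\<lambda>t. \<Sum>n<N. dyson_phillips n t x)"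
      by (intro continuous_on_sum) auto
  qed
  show "continuous_on {0..\<tau>} (\<lambda>t. perturbed t x)"
    by (rule uniform_limit_theorem[OF C U]) simp
qed

lemma tendsto_duhamel_uniform_limit:
  assumes F: "\<And>N. continuous_on {0..} (F N)" and f: "continuous_on {0..} f" and t: "0 \<le> t"
    and lim: "uniform_limit {0..t} F f sequentially"
  shows "(\<lambda>N. duhamel (F N) t) \<longlonglongrightarrow> duhamel f t"
proof (rule tendstoI)
  fix e :: real assume e: "e > 0"
  obtain K where K: "K \<ge> 1" "\<forall>s\<in>{0..t}. \<forall>x. norm (T s x) \<le> K * norm x"
    using T_bounded_on_interval by blast
  define C where "C = K * onorm P * t + 1"
  have "0 \<le> K * onorm P * t" using K onorm_P_nonneg t by simp
  then have C: "C > 0" by (simp add: C_def)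
  have "\<forall>\<^sub>F N in sequentially. \<forall>s\<in>{0..t}. dist (F N s) (f s) < e / C"
    using uniform_limitD[OF lim] e C by simp
  then show "\<forall>\<^sub>F N in sequentially. dist (duhamel (F N) t) (duhamel f t) < e"
  proof (rule eventually_mono)
    fix N assume N: "\<forall>s\<in>{0..t}. dist (F N s) (f s) < e / C"
    have "norm (duhamel (\<lambda>s. F N s - f s) t) \<le> K * onorm P * (e / C) * t ^ Suc 0 / fact (Suc 0)"
      using N K(1) by (intro norm_duhamel_le_monomial[OF continuous_on_diff[OF F f] t K(2)])
        (auto simp: dist_norm less_imp_le)
    also have "\<dots> = (C - 1) / C * e" by (simp add: C_def)
    also have "\<dots> < e" using C e by (simp add: field_simps)
    finally show "dist (duhamel (F N) t) (duhamel f t) < e"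
      by (simp add: dist_norm duhamel_diff[OF F f t])
  qed
qed

lemma perturbed_variation_of_constants:
  assumes t: "0 \<le> t"
  shows "perturbed t x = T t x + duhamel (\<lambda>s. perturbed s x) t"
proof -
  obtain K where K: "K \<ge> 1" "\<forall>s\<in>{0..t}. \<forall>x. norm (T s x) \<le> K * norm x"
    using T_bounded_on_interval by blast
  have "(\<lambda>N. duhamel (\<lambda>s. \<Sum>n<N. dyson_phillips n s x) t) \<longlonglongrightarrow> duhamel (\<lambda>s. perturbed s x) t"
    using K by (intro tendsto_duhamel_uniform_limit continuous_on_sum continuous_on_dyson_phillips
        continuous_on_perturbed t uniform_limit_dyson_phillips) auto
  moreover have "duhamel (\<lambda>s. \<Sum>n<N. dyson_phillips n s x) t = (\<Sum>n<N. dyson_phillips (Suc n) t x)"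
      for N
    using duhamel_sum[of "\<lambda>n s. dyson_phillips n s x", OF continuous_on_dyson_phillips t] by simp
  ultimately have "(\<lambda>n. dyson_phillips (Suc n) t x) sums duhamel (\<lambda>s. perturbed s x) t"
    unfolding sums_def by simp
  then have "duhamel (\<lambda>s. perturbed s x) t = perturbed t x - dyson_phillips 0 t x"
    unfolding perturbed_def using suminf_split_head[OF summable_dyson_phillips[OF t]] sums_unique
    by metis
  then show ?thesis by simp
qed

lemma dyson_phillips_add:
  "0 \<le> t \<Longrightarrow> dyson_phillips n t (x + y) = dyson_phillips n t x + dyson_phillips n t y"
proof (induction n arbitrary: t)
  case 0 then show ?case by (simp add: T_add)
next
  case (Suc n)
  have "dyson_phillips (Suc n) t (x + y) =
      duhamel (\<lambda>s. dyson_phillips n s x + dyson_phillips n s y) t"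
    unfolding dyson_phillips.simps by (rule duhamel_cong) (simp add: Suc.IH)
  also have "\<dots> = dyson_phillips (Suc n) t x + dyson_phillips (Suc n) t y"
    unfolding dyson_phillips.simps by (rule duhamel_add[OF continuous_on_dyson_phillips
        continuous_on_dyson_phillips Suc.prems])
  finally show ?case .
qed

lemma dyson_phillips_scaleC: "0 \<le> t \<Longrightarrow> dyson_phillips n t (a *\<^sub>C x) = a *\<^sub>C dyson_phillips n t x"
proof (induction n arbitrary: t)
  case 0 then show ?case by (simp add: T_scaleC)
next
  case (Suc n)
  have "dyson_phillips (Suc n) t (a *\<^sub>C x) = duhamel (\<lambda>s. a *\<^sub>C dyson_phillips n s x) t"
    unfolding dyson_phillips.simps by (rule duhamel_cong) (simp add: Suc.IH)
  also have "\<dots> = a *\<^sub>C dyson_phillips (Suc n) t x"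
    unfolding dyson_phillips.simps by (rule duhamel_scaleC[OF continuous_on_dyson_phillips
        Suc.prems])
  finally show ?case .
qed

lemma perturbed_add: "0 \<le> t \<Longrightarrow> perturbed t (x + y) = perturbed t x + perturbed t y"
  unfolding perturbed_def
  by (simp add: dyson_phillips_add suminf_add[OF summable_dyson_phillips summable_dyson_phillips])

lemma perturbed_scaleC: "0 \<le> t \<Longrightarrow> perturbed t (a *\<^sub>C x) = a *\<^sub>C perturbed t x"
  unfolding perturbed_def
  by (simp add: dyson_phillips_scaleC bounded_linear.suminf[OF bounded_linear_scaleC
      summable_dyson_phillips])

lemma perturbed_scaleR: "0 \<le> t \<Longrightarrow> perturbed t (r *\<^sub>R x) = r *\<^sub>R perturbed t x"
  by (simp add: scaleR_eq_scaleC perturbed_scaleC)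

lemma perturbed_bounded:
  assumes t: "0 \<le> t"
  shows "\<exists>B. \<forall>x. norm (perturbed t x) \<le> norm x * B"
proof -
  obtain K where K: "K \<ge> 1" "\<forall>s\<in>{0..t}. \<forall>x. norm (T s x) \<le> K * norm x"
    using T_bounded_on_interval by blast
  have tt: "t \<in> {0..t}" using t by simp
  have "norm (perturbed t x) \<le> norm x * (K * exp (K * onorm P * t))" for x
  proof -
    have "norm (perturbed t x) \<le> (\<Sum>n. K * norm x * ((K * onorm P * t) ^ n / fact n))"
      unfolding perturbed_def
    proof (rule norm_suminf_le)
      show "norm (dyson_phillips n t x) \<le> K * norm x * ((K * onorm P * t) ^ n / fact n)" for n
        using norm_dyson_phillips_le_exp_term[OF K(2) _ tt] K(1) by simp
      show "summable (\<lambda>n. K * norm x * ((K * onorm P * t) ^ n / fact n))"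
        by (intro summable_mult summable_power_div_fact)
    qed
    also have "\<dots> = K * norm x * exp (K * onorm P * t)"
        using sums_mult[OF sums_power_div_fact, of "K * norm x" "K * onorm P * t"]
      by (rule sums_unique[symmetric])
    finally show ?thesis by (simp add: mult_ac)
  qed
  then show ?thesis by blast
qed

lemma bounded_clinear_perturbed:
  assumes t: "0 \<le> t"
  shows "bounded_clinear (perturbed t)"
proof -
  obtain B where B: "\<And>x. norm (perturbed t x) \<le> norm x * B" using perturbed_bounded[OF t] by blast
  have "bounded_linear (perturbed t)"
    by (rule bounded_linear_intro[OF perturbed_add[OF t] perturbed_scaleR[OF t] B])
  then show ?thesis unfolding bounded_clinear_def using perturbed_scaleC[OF t] by blast
qed

lemma dyson_phillips_at_0: "dyson_phillips n 0 x = (if n = 0 then x else 0)"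
  by (cases n) (simp_all add: duhamel_def)

lemma perturbed_0: "perturbed 0 x = x"
proof -
  have "(\<lambda>n. dyson_phillips n 0 x) sums x"
    unfolding dyson_phillips_at_0 using sums_single[of 0 "\<lambda>_. x"] by simp
  then show ?thesis unfolding perturbed_def by (rule sums_unique[symmetric])
qed

lemma norm_duhamel_fixed_point_le:
  assumes W: "continuous_on {0..} W" and eq: "\<And>t. 0 \<le> t \<Longrightarrow> W t = duhamel W t"
    and K: "K \<ge> 0" "\<forall>s\<in>{0..\<tau>}. \<forall>x. norm (T s x) \<le> K * norm x"
    and m: "\<forall>s\<in>{0..\<tau>}. norm (W s) \<le> m"
  shows "\<forall>s\<in>{0..\<tau>}. norm (W s) \<le> m * (K * onorm P) ^ n * s ^ n / fact n"
proof (induction n)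
  case 0 then show ?case using m by simp
next
  case (Suc n)
  show ?case
  proof
    fix s assume s: "s \<in> {0..\<tau>}"
    have "norm (W s) = norm (duhamel W s)" using eq s by simp
    also have "\<dots> \<le> K * onorm P * (m * (K * onorm P) ^ n) * s ^ Suc n / fact (Suc n)"
      using K Suc.IH s by (intro norm_duhamel_le_monomial[OF W]) auto
    finally show "norm (W s) \<le> m * (K * onorm P) ^ Suc n * s ^ Suc n / fact (Suc n)"
      by (simp add: mult_ac)
  qed
qed

lemma duhamel_fixed_point_eq_0:
  assumes W: "continuous_on {0..} W" and eq: "\<And>t. 0 \<le> t \<Longrightarrow> W t = duhamel W t"
    and t: "0 \<le> t"
  shows "W t = 0"
proof -
  obtain K where K: "K \<ge> 1" "\<forall>s\<in>{0..t}. \<forall>x. norm (T s x) \<le> K * norm x"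
    using T_bounded_on_interval by blast
  have "continuous_on {0..t} W" using W by (rule continuous_on_subset) auto
  then have "bounded (W ` {0..t})" by (intro compact_imp_bounded compact_continuous_image) auto
  then obtain m where m: "\<forall>s\<in>{0..t}. norm (W s) \<le> m" unfolding bounded_iff by auto
  have "norm (W t) \<le> m * ((K * onorm P * t) ^ n / fact n)" for n
  proof -
    have "norm (W t) \<le> m * (K * onorm P) ^ n * t ^ n / fact n"
      using norm_duhamel_fixed_point_le[OF W eq _ K(2) m, of n] K(1) t by auto
    then show ?thesis by (simp add: power_mult_distrib mult_ac)
  qed
  moreover have "(\<lambda>n. m * ((K * onorm P * t) ^ n / fact n)) \<longlonglongrightarrow> 0"
    by (intro summable_LIMSEQ_zero summable_mult summable_power_div_fact)
  ultimately have "norm (W t) \<le> 0" by (intro LIMSEQ_le_const) auto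
  then show ?thesis by simp
qed

text \<open>The Duhamel integral over \<open>[0, u + r]\<close> splits at \<open>r\<close>; on \<open>[0, r]\<close> the factor
  \<open>T (u + r - s) = T u \<circ> T (r - s)\<close> comes out of the integral.\<close>

lemma duhamel_add_time:
  assumes g: "continuous_on {0..} g" and r: "0 \<le> r" and u: "0 \<le> u"
  shows "duhamel g (u + r) = T u (duhamel g r) + duhamel (\<lambda>s. g (s + r)) u"
proof -
  define I where "I s = T (u + r - s) (P (g s))" for s
  have I: "I integrable_on {0..u + r}"
    unfolding I_def using r u by (intro duhamel_integrand_integrable[OF g]) simp
  have "duhamel g (u + r) = integral {0..r} I + integral {r..u + r} I"
    unfolding duhamel_def I_def[symmetric]
    by (rule Henstock_Kurzweil_Integration.integral_combine[OF r _ I, symmetric]) (use u in simp)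
  also have "integral {0..r} I = integral {0..r} (T u \<circ> (\<lambda>s. T (r - s) (P (g s))))"
  proof (rule integral_cong)
    fix s assume "s \<in> {0..r}"
    then show "I s = (T u \<circ> (\<lambda>s. T (r - s) (P (g s)))) s"
      using T_semigroup[of u "r - s" "P (g s)"] u by (simp add: I_def add_diff_eq)
  qed
  also have "\<dots> = T u (duhamel g r)"
    unfolding duhamel_def
    by (rule integral_linear[OF duhamel_integrand_integrable[OF g r] bounded_linear_T[OF u]])
  also have "integral {r..u + r} I = integral {0..u} (I \<circ> (+) r)"
    using integral_shift_Icc_real[where f = I and c = r and a = 0 and b = u] by simp
  also have "\<dots> = duhamel (\<lambda>s. g (s + r)) u"
    unfolding duhamel_def by (rule integral_cong) (simp add: I_def add.commute)
  finally show ?thesis .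
qed

lemma perturbed_semigroup:
  assumes r: "0 \<le> r" and t: "0 \<le> t"
  shows "perturbed (t + r) x = perturbed t (perturbed r x)"
proof -
  define V1 where "V1 = (\<lambda>s. perturbed (s + r) x)"
  define V2 where "V2 = (\<lambda>s. perturbed s (perturbed r x))"
  have V1: "continuous_on {0..} V1"
    unfolding V1_def using r
    by (intro continuous_on_compose2[OF continuous_on_perturbed, of _ "\<lambda>s. s + r"]
        continuous_intros) auto
  have V2: "continuous_on {0..} V2" unfolding V2_def by (rule continuous_on_perturbed)
  have "V1 u = T u (perturbed r x) + duhamel V1 u" if u: "0 \<le> u" for u
  proof -
    have "V1 u = T (u + r) x + duhamel (\<lambda>s. perturbed s x) (u + r)"
      unfolding V1_def using u r by (simp add: perturbed_variation_of_constants)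
    also have "\<dots> = T u (T r x + duhamel (\<lambda>s. perturbed s x) r) + duhamel V1 u"
      unfolding V1_def duhamel_add_time[OF continuous_on_perturbed r u]
      by (simp add: T_semigroup[OF u r] T_add[OF u])
    finally show ?thesis by (simp add: perturbed_variation_of_constants[OF r])
  qed
  moreover have "V2 u = T u (perturbed r x) + duhamel V2 u" if "0 \<le> u" for u
    unfolding V2_def by (rule perturbed_variation_of_constants[OF that])
  ultimately have "(\<lambda>s. V1 s - V2 s) u = duhamel (\<lambda>s. V1 s - V2 s) u" if "0 \<le> u" for u
    using that by (simp add: duhamel_diff[OF V1 V2])
  from duhamel_fixed_point_eq_0[OF continuous_on_diff[OF V1 V2] this t]
  show ?thesis by (simp add: V1_def V2_def)
qed

lemma norm_duhamel_sub_le: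
  assumes g: "continuous_on {0..} g" and h: "0 \<le> h"
    and near: "\<And>s. s \<in> {0..h} \<Longrightarrow> norm (T (h - s) (P (g s)) - y) \<le> \<epsilon>"
  shows "norm (duhamel g h - h *\<^sub>R y) \<le> h * \<epsilon>"
proof -
  have "duhamel g h - h *\<^sub>R y = integral {0..h} (\<lambda>s. T (h - s) (P (g s)) - y)"
    unfolding duhamel_def using h
    by (simp add: integral_diff[OF duhamel_integrand_integrable[OF g h] integrable_const_ivl])
  also have "norm \<dots> \<le> integral {0..h} (\<lambda>s. \<epsilon>)"
    using duhamel_integrand_integrable[OF g h] near
    by (intro integral_norm_bound_integral integrable_diff) auto
  finally show ?thesis using h by simp
qed

lemma duhamel_quotient_tendsto:
  assumes g: "continuous_on {0..} g"
  shows "((\<lambda>h. (1 / h) *\<^sub>R duhamel g h) \<longlongrightarrow> P (g 0)) (at_right 0)"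
proof (rule tendstoI)
  fix e :: real assume e: "e > 0"
  define H where "H p = T (fst p) (P (g (snd p)))" for p
  have "continuous_on ({0..1} \<times> {0..1}) H"
    unfolding H_def by (rule continuous_on_orbit_joint[OF continuous_on_P_comp[OF g]])
  then obtain d where d: "d > 0"
    "\<forall>p\<in>{0..1} \<times> {0..1}. dist p (0, 0) < d \<longrightarrow> dist (H p) (H (0, 0)) < e / 2"
    using e unfolding continuous_on_iff
    by (metis half_gt_zero mem_Sigma_iff atLeastAtMost_iff order_refl zero_le_one)
  show "\<forall>\<^sub>F h in at_right 0. dist ((1 / h) *\<^sub>R duhamel g h) (P (g 0)) < e"
    unfolding eventually_at_right_field
  proof (intro exI[of _ "min 1 d"] conjI allI impI)
    fix h :: real assume h: "0 < h" "h < min 1 d"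
    have "norm (duhamel g h - h *\<^sub>R P (g 0)) \<le> h * (e / 2)"
    proof (rule norm_duhamel_sub_le[OF g])
      fix s assume s: "s \<in> {0..h}"
      have "dist (h - s, s) (0, 0) \<le> h"
        using s norm_Pair_le[of "h - s" s] by (simp add: dist_norm)
      then have "dist (H (h - s, s)) (H (0, 0)) < e / 2" using d s h by auto
      then show "norm (T (h - s) (P (g s)) - P (g 0)) \<le> e / 2" by (simp add: H_def dist_norm)
    qed (use h in simp)
    moreover have "(1 / h) *\<^sub>R duhamel g h - P (g 0) = (1 / h) *\<^sub>R (duhamel g h - h *\<^sub>R P (g 0))"
      using h by (simp add: scaleR_diff_right)
    then have "norm ((1 / h) *\<^sub>R duhamel g h - P (g 0)) = norm (duhamel g h - h *\<^sub>R P (g 0)) / h"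
      using h by simp
    ultimately have "norm ((1 / h) *\<^sub>R duhamel g h - P (g 0)) \<le> e / 2"
      using h by (simp add: pos_divide_le_eq mult.commute)
    then show "dist ((1 / h) *\<^sub>R duhamel g h) (P (g 0)) < e" using e by (simp add: dist_norm)
  qed (use d in simp)
qed

lemma perturbed_quotient_tendsto_iff:
  "((\<lambda>h. (1 / h) *\<^sub>R (perturbed h x - x)) \<longlongrightarrow> z) (at_right 0) \<longleftrightarrow>
   ((\<lambda>h. (1 / h) *\<^sub>R (T h x - x)) \<longlongrightarrow> z - P x) (at_right 0)"
proof -
  define d where "d = (\<lambda>h. (1 / h) *\<^sub>R duhamel (\<lambda>s. perturbed s x) h)"
  have d: "(d \<longlongrightarrow> P x) (at_right 0)"
    using duhamel_quotient_tendsto[OF continuous_on_perturbed[of x]] by (simp add: d_def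
        perturbed_0)
  have eq: "\<forall>\<^sub>F h in at_right 0. (1 / h) *\<^sub>R (perturbed h x - x) = (1 / h) *\<^sub>R (T h x - x) + d h"
    unfolding eventually_at_right_field
    by (rule exI[of _ 1]) (auto simp: d_def perturbed_variation_of_constants algebra_simps)
  show ?thesis
  proof
    assume "((\<lambda>h. (1 / h) *\<^sub>R (perturbed h x - x)) \<longlongrightarrow> z) (at_right 0)"
    from tendsto_diff[OF this d] show "((\<lambda>h. (1 / h) *\<^sub>R (T h x - x)) \<longlongrightarrow> z - P x) (at_right 0)"
      by (rule Lim_transform_eventually) (use eq in \<open>auto elim: eventually_mono\<close>)
  next
    assume "((\<lambda>h. (1 / h) *\<^sub>R (T h x - x)) \<longlongrightarrow> z - P x) (at_right 0)"
    from tendsto_add[OF this d]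
    have "((\<lambda>h. (1 / h) *\<^sub>R (T h x - x) + d h) \<longlongrightarrow> z) (at_right 0)" by simp
    then show "((\<lambda>h. (1 / h) *\<^sub>R (perturbed h x - x)) \<longlongrightarrow> z) (at_right 0)"
      by (rule Lim_transform_eventually) (use eq in \<open>auto elim: eventually_mono\<close>)
  qed
qed

lemma c0_semigroup_perturbed: "c0_semigroup perturbed"
  unfolding c0_semigroup_def
proof (intro conjI allI impI)
  show "bounded_clinear (perturbed t)" if "0 \<le> t" for t
    using bounded_clinear_perturbed that by blast
  show "perturbed 0 = id" by (rule ext) (simp add: perturbed_0)
  show "perturbed (s + t) = perturbed s \<circ> perturbed t" if "0 \<le> s" "0 \<le> t" for s t
    by (rule ext) (simp add: perturbed_semigroup that)
  fix x
  have "((\<lambda>t. perturbed t x) \<longlongrightarrow> perturbed 0 x) (at 0 within {0..})"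
    using continuous_on_perturbed[of x] unfolding continuous_on_def by simp
  then have "((\<lambda>t. perturbed t x) \<longlongrightarrow> perturbed 0 x) (at 0 within {0<..})"
    by (rule tendsto_within_subset) auto
  then show "((\<lambda>t. perturbed t x) \<longlongrightarrow> x) (at_right 0)" by (simp add: perturbed_0)
qed

end

lemma generates_c0_add_bounded:
  fixes DA :: "'x::complex_hilbert set" and A P :: "'x \<Rightarrow> 'x"
  assumes gen: "generates_c0 DA A" and P: "bounded_clinear P"
  shows "generates_c0 DA (\<lambda>x. A x + P x)"
proof -
  obtain T where T: "c0_semigroup T"
    and DA: "DA = {x. \<exists>y. ((\<lambda>h. (1 / h) *\<^sub>R (T h x - x)) \<longlongrightarrow> y) (at_right 0)}"
    and A: "\<forall>x\<in>DA. ((\<lambda>h. (1 / h) *\<^sub>R (T h x - x)) \<longlongrightarrow> A x) (at_right 0)"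
    using gen unfolding generates_c0_def by blast
  interpret bounded_perturbation T P
    by (intro bounded_perturbation.intro strongly_continuous_semigroup.intro
        bounded_perturbation_axioms.intro T P)
  have "(\<exists>y. ((\<lambda>h. (1 / h) *\<^sub>R (perturbed h x - x)) \<longlongrightarrow> y) (at_right 0)) \<longleftrightarrow>
      (\<exists>y. ((\<lambda>h. (1 / h) *\<^sub>R (T h x - x)) \<longlongrightarrow> y) (at_right 0))" for x
    unfolding perturbed_quotient_tendsto_iff
    by (metis add_diff_cancel_right')
  then have "DA = {x. \<exists>y. ((\<lambda>h. (1 / h) *\<^sub>R (perturbed h x - x)) \<longlongrightarrow> y) (at_right 0)}"
    unfolding DA by blast
  moreover have "\<forall>x\<in>DA. ((\<lambda>h. (1 / h) *\<^sub>R (perturbed h x - x)) \<longlongrightarrow> A x + P x) (at_right 0)"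
    using A by (simp add: perturbed_quotient_tendsto_iff)
  ultimately show ?thesis unfolding generates_c0_def using c0_semigroup_perturbed by blast
qed
section \<open>Resolvent estimates from strict passivity\<close>

lemma inner_minus_scaled_self_le:
  fixes y u :: "'a::real_inner"
  assumes c: "0 < c"
  shows "inner y u - c * inner y y \<le> (norm u)^2 / (4 * c)"
proof -
  have "4 * c * (norm y * norm u - c * (norm y)^2) = (norm u)^2 - (norm u - 2 * c * norm y)^2"
    by (simp add: power2_eq_square algebra_simps)
  also have "\<dots> \<le> (norm u)^2" by simp
  finally have "norm y * norm u - c * (norm y)^2 \<le> (norm u)^2 / (4 * c)"
    using c by (simp add: field_simps)
  then show ?thesis using norm_cauchy_schwarz[of y u] by (simp add: power2_norm_eq_inner)
qed

lemma onorm_square_le: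
  assumes f: "bounded_linear f" and k: "0 \<le> k" and le: "\<And>x. (norm (f x))^2 \<le> k * (norm x)^2"
  shows "(onorm f)^2 \<le> k"
proof -
  have "norm (f x) \<le> sqrt k * norm x" for x
    using real_sqrt_le_mono[OF le[of x]] by (simp add: real_sqrt_mult)
  then have "onorm f \<le> sqrt k" by (intro onorm_bound) (use k in auto)
  then have "(onorm f)^2 \<le> (sqrt k)^2" by (intro power_mono onorm_pos_le[OF f])
  then show ?thesis using k by simp
qed

lemma inner_right_le_onorm:
  assumes "bounded_linear R"
  shows "inner x (R x) \<le> onorm R * (norm x)^2"
proof -
  have "inner x (R x) \<le> norm x * norm (R x)" by (rule norm_cauchy_schwarz)
  also have "\<dots> \<le> norm x * (onorm R * norm x)" by (intro mult_left_mono onorm[OF assms]) simp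
  finally show ?thesis by (simp add: power2_eq_square mult_ac)
qed

text \<open>The inequality assumed here is what the closed-loop passivity inequality becomes at
  \<open>x = R (G + K u)\<close> when \<open>R\<close> is the resolvent of the closed-loop generator at a point
  \<open>\<lambda>\<close> with \<open>Re \<lambda> \<ge> 0\<close>, \<open>K = B\<^sub>Q\<close>, \<open>L = C\<^sub>Q\<close> and \<open>M = D\<^sub>Q\<close>.\<close>

locale resolvent_dissipation =
  fixes R :: "'x::real_inner \<Rightarrow> 'x" and K :: "'u::real_inner \<Rightarrow> 'x"
    and L :: "'x \<Rightarrow> 'u" and M :: "'u \<Rightarrow> 'u" and c :: real
  assumes bounded_linear_R: "bounded_linear R" and bounded_linear_K: "bounded_linear K"
    and bounded_linear_L: "bounded_linear L" and bounded_linear_M: "bounded_linear M"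
    and c_pos: "c > 0"
    and dissipation: "c * (norm (L (R (G + K u)) + M u))^2
      \<le> inner G (R (G + K u)) + inner (L (R (G + K u)) + M u) u"
begin

lemma onorm_transfer_le: "onorm (\<lambda>u. L (R (K u)) + M u) \<le> 1 / c"
proof (rule onorm_bound)
  fix u
  define y where "y = L (R (K u)) + M u"
  have "c * (norm y)^2 \<le> norm y * norm u"
    using dissipation[of 0 u] norm_cauchy_schwarz[of y u] by (simp add: y_def)
  then have "norm y \<le> norm u / c" by (intro le_divide_if_mult_square_le c_pos) auto
  then show "norm (L (R (K u)) + M u) \<le> 1 / c * norm u" by (simp add: y_def)
qed (use c_pos in simp)

lemma onorm_output_resolvent_le: "(onorm (\<lambda>x. L (R x)))^2 \<le> 1 / c * onorm R"
proof (rule onorm_square_le)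
  show "bounded_linear (\<lambda>x. L (R x))"
    using bounded_linear_compose[OF bounded_linear_L bounded_linear_R] .
  show "0 \<le> 1 / c * onorm R" using c_pos onorm_pos_le[OF bounded_linear_R] by simp
  fix G
  have "c * (norm (L (R G)))^2 \<le> inner G (R G)"
    using dissipation[of G 0] linear_0[OF bounded_linear.linear[OF bounded_linear_K]]
      linear_0[OF bounded_linear.linear[OF bounded_linear_M]] by simp
  also have "\<dots> \<le> onorm R * (norm G)^2" by (rule inner_right_le_onorm[OF bounded_linear_R])
  finally show "(norm (L (R G)))^2 \<le> 1 / c * onorm R * (norm G)^2"
    using c_pos by (simp add: field_simps)
qed

text \<open>Test the dissipation inequality with \<open>G = -t R (K u)\<close> and optimise over \<open>t\<close>,
  which gives \<open>t = 1 / (2 \<parallel>R\<parallel>)\<close>.\<close>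

lemma norm_resolvent_input_le: "(norm (R (K u)))^2 \<le> 1 / c * onorm R * (norm u)^2"
proof -
  define r where "r = onorm R"
  have r: "r \<ge> 0" unfolding r_def by (rule onorm_pos_le[OF bounded_linear_R])
  define x where "x = R (K u)"
  show ?thesis
  proof (cases "r = 0")
    case True
    then show ?thesis using onorm[OF bounded_linear_R, of "K u"] by (simp add: r_def)
  next
    case False
    then have r: "r > 0" using r by simp
    interpret R: bounded_linear R by (rule bounded_linear_R)
    define t where "t = 1 / (2 * r)"
    define y where "y = L (R (- (t *\<^sub>R x) + K u)) + M u"
    have "c * (norm y)^2 \<le> inner (- (t *\<^sub>R x)) (R (- (t *\<^sub>R x) + K u)) + inner y u"
      unfolding y_def by (rule dissipation)
    also have "R (- (t *\<^sub>R x) + K u) = x - t *\<^sub>R R x" by (simp add: x_def R.diff R.scaleR)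
    then have "inner (- (t *\<^sub>R x)) (R (- (t *\<^sub>R x) + K u)) = t^2 * inner x (R x) - t * (norm x)^2"
      unfolding power2_norm_eq_inner by (simp add: inner_diff_right power2_eq_square)
    also have "t^2 * inner x (R x) - t * (norm x)^2 \<le> t^2 * (r * (norm x)^2) - t * (norm x)^2"
      using inner_right_le_onorm[OF bounded_linear_R, of x] by (simp add: r_def mult_left_mono)
    also have "t^2 * (r * (norm x)^2) - t * (norm x)^2 = - ((norm x)^2 / (4 * r))"
      using r by (simp add: t_def power2_eq_square field_simps)
    finally have "(norm x)^2 / (4 * r) \<le> inner y u - c * inner y y"
      by (simp add: power2_norm_eq_inner)
    also have "\<dots> \<le> (norm u)^2 / (4 * c)" by (rule inner_minus_scaled_self_le[OF c_pos])
    finally show ?thesis using r c_pos by (simp add: x_def r_def field_simps)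
  qed
qed

lemma onorm_resolvent_input_le: "(onorm (\<lambda>u. R (K u)))^2 \<le> 1 / c * onorm R"
proof (rule onorm_square_le)
  show "bounded_linear (\<lambda>u. R (K u))"
    using bounded_linear_compose[OF bounded_linear_R bounded_linear_K] .
  show "0 \<le> 1 / c * onorm R" using c_pos onorm_pos_le[OF bounded_linear_R] by simp
qed (rule norm_resolvent_input_le)

end

section \<open>Output feedback\<close>

lemma boundedly_invertible_inv:
  assumes "boundedly_invertible N"
  shows bounded_clinear_inv_boundedly_invertible: "bounded_clinear (inv N)"
    and boundedly_invertible_inv_right: "N (inv N y) = y"
    and boundedly_invertible_inv_left: "inv N (N x) = x"
proof -
  obtain S where S: "bounded_clinear S" "S \<circ> N = id" "N \<circ> S = id"
    using assms unfolding boundedly_invertible_def by blast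
  then have "inv N = S" by (intro inv_unique_comp)
  then show "bounded_clinear (inv N)" "N (inv N y) = y" "inv N (N x) = x"
    using S by (simp_all add: pointfree_idE)
qed

lemma inner_inv_coercive:
  fixes Q :: "'a::real_inner \<Rightarrow> 'a"
  assumes bij: "bij Q" and M: "M > 0" and Q_le: "\<And>v. norm (Q v) \<le> M * norm v" and c: "c \<ge> 0"
    and coercive: "\<And>v. c * inner v v \<le> inner (Q v) v"
  shows "c / M^2 * inner w w \<le> inner (inv Q w) w"
proof -
  define v where "v = inv Q w"
  have w: "w = Q v" unfolding v_def using bij by (simp add: bij_is_surj surj_f_inv_f)
  have "(norm w)^2 \<le> M^2 * (norm v)^2"
    unfolding w using Q_le[of v] by (simp add: power_mult_distrib[symmetric] power_mono)
  then have "c / M^2 * (norm w)^2 \<le> c / M^2 * (M^2 * (norm v)^2)"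
    using c M by (intro mult_left_mono) auto
  also have "\<dots> = c * (norm v)^2" using M by simp
  also have "\<dots> \<le> inner w v" using coercive[of v] by (simp add: w power2_norm_eq_inner)
  finally show ?thesis by (simp add: v_def power2_norm_eq_inner inner_commute)
qed

text \<open>The pairing \<open>\<langle>(I + D Q) u, Q u\<rangle> \<ge> c \<parallel>u\<parallel>\<^sup>2\<close> bounds the inverse of \<open>I + D Q\<close>.\<close>

lemma boundedly_invertible_id_plus_accretive_coercive:
  fixes D Q :: "'u::complex_hilbert \<Rightarrow> 'u"
  assumes D: "bounded_clinear D" and D_accretive: "\<And>u. 0 \<le> inner (D u) u"
    and Q: "bounded_clinear Q" and c: "c > 0" and Q_coercive: "\<And>u. c * inner u u \<le> inner (Q u) u"
  shows "boundedly_invertible (\<lambda>u. u + D (Q u))"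
proof -
  have Q_lin: "bounded_linear Q" using Q by (rule bounded_clinear_imp_bounded_linear)
  define M where "M = onorm Q + 1"
  have M: "M > 0" using onorm_pos_le[OF Q_lin] by (simp add: M_def)
  have Q_le: "norm (Q v) \<le> M * norm v" for v
    using onorm[OF Q_lin, of v] by (simp add: M_def distrib_right add_increasing2)
  have Q_bij: "bij Q" by (rule bij_if_coercive[OF Q_lin c Q_coercive])
  have "bounded_clinear (inv Q)"
    using bounded_clinear_inv[OF Q Q_bij c coercive_imp_bounded_below[where F = Q, OF c
        Q_coercive]] .
  then have "bij (\<lambda>w. inv Q w + D w)"
    using bounded_clinear_add[OF _ D] inner_inv_coercive[OF Q_bij M Q_le _ Q_coercive] D_accretive
        c M
    by (intro bij_if_coercive[where k = "c / M^2"] bounded_clinear_imp_bounded_linear)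
      (auto simp: inner_add_left add_increasing2)
  moreover have "(\<lambda>u. u + D (Q u)) = (\<lambda>w. inv Q w + D w) \<circ> Q"
    using Q_bij by (simp add: fun_eq_iff bij_is_inj)
  ultimately have bij: "bij (\<lambda>u. u + D (Q u))" using Q_bij by (simp add: bij_comp)
  have below: "c / M * norm u \<le> norm (u + D (Q u))" for u
  proof -
    have "c * (norm u)^2 \<le> inner (Q u) u + inner (D (Q u)) (Q u)"
      using Q_coercive[of u] D_accretive[of "Q u"] by (simp add: power2_norm_eq_inner)
    also have "\<dots> = inner (u + D (Q u)) (Q u)" by (simp add: inner_add_left inner_commute[of u])
    also have "\<dots> \<le> norm (u + D (Q u)) * (M * norm u)"
      using norm_cauchy_schwarz Q_le by (metis mult_left_mono norm_ge_zero order_trans)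
    finally have "norm u \<le> M * norm (u + D (Q u)) / c"
      using M by (intro le_divide_if_mult_square_le c) (auto simp: mult_ac)
    then show ?thesis using c M by (simp add: field_simps)
  qed
  have N: "bounded_clinear (\<lambda>u. u + D (Q u))"
    by (rule bounded_clinear_add[OF bounded_clinear_ident bounded_clinear_compose[OF D Q]])
  have "bounded_clinear (inv (\<lambda>u. u + D (Q u)))"
    using bounded_clinear_inv[OF N bij _ below] c M by simp
  moreover have "inv (\<lambda>u. u + D (Q u)) \<circ> (\<lambda>u. u + D (Q u)) = id"
    using bij_is_inj[OF bij] by (rule inv_o_cancel)
  moreover have "(\<lambda>u. u + D (Q u)) \<circ> inv (\<lambda>u. u + D (Q u)) = id"
    using bij_is_surj[OF bij] by (simp add: surj_iff)
  ultimately show ?thesis unfolding boundedly_invertible_def using N by blast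
qed

lemma inv_add_compose_commute:
  fixes D Q :: "'u::complex_hilbert \<Rightarrow> 'u"
  assumes D: "linear D" and Q: "linear Q" and inv: "boundedly_invertible (\<lambda>u. u + D (Q u))"
  shows "inv (\<lambda>u. u + Q (D u)) = (\<lambda>v. v - Q (inv (\<lambda>u. u + D (Q u)) (D v)))"
proof (rule inv_unique_comp)
  let ?N = "\<lambda>u. u + D (Q u)"
  show "(\<lambda>u. u + Q (D u)) \<circ> (\<lambda>v. v - Q (inv ?N (D v))) = id"
  proof
    fix v
    have "D (v - Q (inv ?N (D v))) = inv ?N (D v)"
      using boundedly_invertible_inv_right[OF inv, of "D v"]
      by (simp add: linear_diff[OF D] algebra_simps)
    then show "((\<lambda>u. u + Q (D u)) \<circ> (\<lambda>v. v - Q (inv ?N (D v)))) v = id v" by simp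
  qed
  show "(\<lambda>v. v - Q (inv ?N (D v))) \<circ> (\<lambda>u. u + Q (D u)) = id"
  proof
    fix u
    have "D (u + Q (D u)) = ?N (D u)" by (simp add: linear_add[OF D])
    then show "((\<lambda>v. v - Q (inv ?N (D v))) \<circ> (\<lambda>u. u + Q (D u))) u = id u"
      by (simp add: boundedly_invertible_inv_left[OF inv])
  qed
qed

lemma generates_c0_zero_in_domain:
  assumes "generates_c0 DA A"
  shows "0 \<in> DA"
proof -
  obtain T where T: "c0_semigroup T"
    and DA: "DA = {x. \<exists>y. ((\<lambda>h. (1 / h) *\<^sub>R (T h x - x)) \<longlongrightarrow> y) (at_right 0)}"
    using assms unfolding generates_c0_def by blast
  interpret strongly_continuous_semigroup T by (rule strongly_continuous_semigroup.intro[OF T])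
  have "\<forall>\<^sub>F h in at_right 0. (1 / h) *\<^sub>R (T h 0 - 0) = 0"
    unfolding eventually_at_right_field by (intro exI[of _ 1]) (auto simp: T_zero)
  then have "((\<lambda>h. (1 / h) *\<^sub>R (T h 0 - 0)) \<longlongrightarrow> 0) (at_right 0)"
    by (rule tendsto_eventually)
  then show ?thesis using DA by blast
qed

lemma in_resolvent_set_resolvent:
  assumes "in_resolvent_set DA A lam"
  shows bounded_clinear_resolvent: "bounded_clinear (resolvent DA A lam)"
    and resolvent_in_domain: "resolvent DA A lam y \<in> DA"
    and resolvent_right_inverse: "lam *\<^sub>C resolvent DA A lam y - A (resolvent DA A lam y) = y"
proof -
  let ?f = "\<lambda>x. lam *\<^sub>C x - A x"
  have bij: "bij_betw ?f DA UNIV" and "bounded_clinear (the_inv_into DA ?f)"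
    using assms unfolding in_resolvent_set_def by blast+
  then show "bounded_clinear (resolvent DA A lam)" by (simp add: resolvent_def)
  have "inj_on ?f DA" and "y \<in> ?f ` DA"
    using bij by (auto simp: bij_betw_def)
  then show "resolvent DA A lam y \<in> DA" "?f (resolvent DA A lam y) = y"
    unfolding resolvent_def by (auto intro: the_inv_into_into f_the_inv_into_f)
qed

locale impedance_passive_feedback =
  fixes DA :: "'x::complex_hilbert set" and A :: "'x \<Rightarrow> 'x" and B :: "'u::complex_hilbert \<Rightarrow> 'x"
    and C :: "'x \<Rightarrow> 'u" and D Q :: "'u \<Rightarrow> 'u" and c :: real
  assumes open_loop: "impedance_passive DA A B C D"
    and bounded_clinear_Q: "bounded_clinear Q" and c_pos: "c > 0"
    and Q_coercive: "c * inner u u \<le> inner (Q u) u"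
begin

abbreviation Ninv :: "'u \<Rightarrow> 'u" where "Ninv \<equiv> inv (\<lambda>u. u + D (Q u))"
abbreviation AQ :: "'x \<Rightarrow> 'x" where "AQ x \<equiv> A x - B (Q (Ninv (C x)))"
abbreviation BQ :: "'u \<Rightarrow> 'x" where "BQ u \<equiv> B (inv (\<lambda>u. u + Q (D u)) u)"
abbreviation CQ :: "'x \<Rightarrow> 'u" where "CQ x \<equiv> Ninv (C x)"
abbreviation DQ :: "'u \<Rightarrow> 'u" where "DQ u \<equiv> Ninv (D u)"

lemma bounded_clinear_B: "bounded_clinear B"
  and bounded_clinear_C: "bounded_clinear C"
  and bounded_clinear_D: "bounded_clinear D"
  and generates_c0_A: "generates_c0 DA A"
  and passive_inequality: "x \<in> DA \<Longrightarrow> inner (A x + B u) x \<le> inner (C x + D u) u"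
  using open_loop unfolding impedance_passive_def by auto

lemma D_accretive: "0 \<le> inner (D u) u"
  using passive_inequality[OF generates_c0_zero_in_domain[OF generates_c0_A], of u]
  by (simp add: linear_0[OF bounded_clinear_imp_linear[OF bounded_clinear_C]])

lemma boundedly_invertible_id_plus_DQ: "boundedly_invertible (\<lambda>u. u + D (Q u))"
  by (rule boundedly_invertible_id_plus_accretive_coercive[OF bounded_clinear_D D_accretive
      bounded_clinear_Q
        c_pos Q_coercive])

lemma inv_id_plus_QD: "inv (\<lambda>u. u + Q (D u)) = (\<lambda>v. v - Q (Ninv (D v)))"
  by (rule inv_add_compose_commute[OF bounded_clinear_imp_linear[OF bounded_clinear_D]
        bounded_clinear_imp_linear[OF bounded_clinear_Q] boundedly_invertible_id_plus_DQ])

lemma bounded_clinear_Ninv: "bounded_clinear Ninv"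
  by (rule bounded_clinear_inv_boundedly_invertible[OF boundedly_invertible_id_plus_DQ])

lemma bounded_clinear_BQ: "bounded_clinear BQ"
  unfolding inv_id_plus_QD
  by (intro bounded_clinear_compose[OF bounded_clinear_B] bounded_clinear_sub bounded_clinear_ident
      bounded_clinear_compose[OF bounded_clinear_Q] bounded_clinear_compose[OF bounded_clinear_Ninv]
      bounded_clinear_D)

lemma bounded_clinear_CQ: "bounded_clinear CQ"
  by (rule bounded_clinear_compose[OF bounded_clinear_Ninv bounded_clinear_C])

lemma bounded_clinear_DQ: "bounded_clinear DQ"
  by (rule bounded_clinear_compose[OF bounded_clinear_Ninv bounded_clinear_D])

lemma generates_c0_AQ: "generates_c0 DA AQ"
proof -
  have "bounded_clinear (\<lambda>x. - B (Q (Ninv (C x))))"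
    by (intro bounded_clinear_minus bounded_clinear_compose[OF bounded_clinear_B]
        bounded_clinear_compose[OF bounded_clinear_Q] bounded_clinear_CQ)
  from generates_c0_add_bounded[OF generates_c0_A this] show ?thesis by simp
qed

text \<open>With \<open>y = C\<^sub>Q x + D\<^sub>Q v\<close> and \<open>w = v - Q y\<close> one has \<open>A\<^sub>Q x + B\<^sub>Q v = A x + B w\<close> and
  \<open>C x + D w = y\<close>, so the open-loop inequality for \<open>(x, w)\<close> reads
  \<open>Re\<langle>A\<^sub>Q x + B\<^sub>Q v, x\<rangle> \<le> Re\<langle>y, v\<rangle> - Re\<langle>y, Q y\<rangle>\<close>.\<close>

lemma closed_loop_dissipation:
  assumes x: "x \<in> DA"
  shows "inner (AQ x + BQ v) x + c * inner (CQ x + DQ v) (CQ x + DQ v) \<le> inner (CQ x + DQ v) v"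
proof -
  define y where "y = CQ x + DQ v"
  define w where "w = v - Q y"
  note B = linear_diff[OF bounded_clinear_imp_linear[OF bounded_clinear_B]]
  note D = linear_diff[OF bounded_clinear_imp_linear[OF bounded_clinear_D]]
  have y: "y = Ninv (C x + D v)"
    by (simp add: y_def linear_add[OF bounded_clinear_imp_linear[OF bounded_clinear_Ninv]])
  have AB: "AQ x + BQ v = A x + B w"
    by (simp add: inv_id_plus_QD w_def y_def B algebra_simps
        linear_add[OF bounded_clinear_imp_linear[OF bounded_clinear_Q]]
        linear_add[OF bounded_clinear_imp_linear[OF bounded_clinear_B]])
  have CD: "C x + D w = y"
    using boundedly_invertible_inv_right[OF boundedly_invertible_id_plus_DQ, of "C x + D v"]
    by (simp add: w_def D y[symmetric] algebra_simps)
  have "inner (AQ x + BQ v) x \<le> inner y (v - Q y)"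
    using passive_inequality[OF x, of w] unfolding AB CD by (simp only: w_def)
  also have "\<dots> \<le> inner y v - c * inner y y"
    using Q_coercive[of y] by (simp add: inner_diff_right inner_commute)
  finally show ?thesis by (simp add: y_def)
qed

lemma impedance_passive_closed_loop: "impedance_passive DA AQ BQ CQ DQ"
  unfolding impedance_passive_def
proof (intro conjI ballI allI bounded_clinear_BQ bounded_clinear_CQ bounded_clinear_DQ
    generates_c0_AQ)
  fix x u assume "x \<in> DA"
  then show "inner (AQ x + BQ u) x \<le> inner (CQ x + DQ u) u"
    using closed_loop_dissipation[of x u] c_pos by (smt (verit) inner_ge_zero mult_nonneg_nonneg)
qed

lemma resolvent_dissipation_closed_loop:
  assumes lam: "in_resolvent_set DA AQ lam" and Re_lam: "Re lam \<ge> 0"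
  shows "resolvent_dissipation (resolvent DA AQ lam) BQ CQ DQ c"
proof (rule resolvent_dissipation.intro)
  let ?R = "resolvent DA AQ lam"
  show "bounded_linear ?R"
    by (rule bounded_clinear_imp_bounded_linear[OF bounded_clinear_resolvent[OF lam]])
  show "bounded_linear BQ" "bounded_linear CQ" "bounded_linear DQ"
    by (intro bounded_clinear_imp_bounded_linear bounded_clinear_BQ bounded_clinear_CQ
        bounded_clinear_DQ)+
  show "c > 0" by (rule c_pos)
  fix G u
  define x where "x = ?R (G + BQ u)"
  have "AQ x + BQ u = lam *\<^sub>C x - G"
    using resolvent_right_inverse[OF lam, of "G + BQ u"] by (simp add: x_def algebra_simps)
  then have "Re lam * inner x x - inner G x + c * inner (CQ x + DQ u) (CQ x + DQ u)
      \<le> inner (CQ x + DQ u) u"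
    using closed_loop_dissipation[OF resolvent_in_domain[OF lam], of "G + BQ u" u]
    by (simp add: x_def inner_diff_left inner_scaleC_left_self)
  moreover have "0 \<le> Re lam * inner x x" using Re_lam by simp
  ultimately show "c * (norm (CQ x + DQ u))^2 \<le> inner G x + inner (CQ x + DQ u) u"
    by (simp add: power2_norm_eq_inner inner_commute[of G])
qed

end

theorem lemma2p5:
  fixes DA :: "'x::complex_hilbert set"
    and A :: "'x \<Rightarrow> 'x"
    and B :: "'u::complex_hilbert \<Rightarrow> 'x"
    and C :: "'x \<Rightarrow> 'u" and D :: "'u \<Rightarrow> 'u" and Q :: "'u \<Rightarrow> 'u"
    and c :: real
  assumes sys: "impedance_passive DA A B C D"
    and Q: "bounded_clinear Q"
    and c: "c > 0"
    and ReQ: "\<forall>u. inner (Q u) u \<ge> c * inner u u"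
  shows "boundedly_invertible (\<lambda>u. u + D (Q u)) \<and>
    (let AQ = (\<lambda>x. A x - B (Q (inv (\<lambda>u. u + D (Q u)) (C x))));
         BQ = (\<lambda>u. B (inv (\<lambda>u. u + Q (D u)) u));
         CQ = (\<lambda>x. inv (\<lambda>u. u + D (Q u)) (C x));
         DQ = (\<lambda>u. inv (\<lambda>u. u + D (Q u)) (D u))
     in impedance_passive DA AQ BQ CQ DQ \<and>
        (\<forall>lam. in_resolvent_set DA AQ lam \<and> Re lam \<ge> 0 \<longrightarrow>
           (onorm (\<lambda>u. resolvent DA AQ lam (BQ u)))\<^sup>2 \<le> (1 / c) * onorm (resolvent DA AQ lam) \<and>
           (onorm (\<lambda>x. CQ (resolvent DA AQ lam x)))\<^sup>2 \<le> (1 / c) * onorm (resolvent DA AQ lam) \<and>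
           onorm (\<lambda>u. CQ (resolvent DA AQ lam (BQ u)) + DQ u) \<le> 1 / c))"
proof -
  interpret impedance_passive_feedback DA A B C D Q c
    using sys Q c ReQ by unfold_locales auto
  have estimates: "(onorm (\<lambda>u. resolvent DA AQ lam (BQ u)))\<^sup>2 \<le> 1 / c * onorm (resolvent DA AQ lam)
      \<and> (onorm (\<lambda>x. CQ (resolvent DA AQ lam x)))\<^sup>2 \<le> 1 / c * onorm (resolvent DA AQ lam)
      \<and> onorm (\<lambda>u. CQ (resolvent DA AQ lam (BQ u)) + DQ u) \<le> 1 / c"
    if "in_resolvent_set DA AQ lam" and "Re lam \<ge> 0" for lam
  proof -
    interpret resolvent_dissipation "resolvent DA AQ lam" BQ CQ DQ c
      using resolvent_dissipation_closed_loop[OF that] .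
    show ?thesis using onorm_resolvent_input_le onorm_output_resolvent_le onorm_transfer_le by blast
  qed
  show ?thesis
    unfolding Let_def using boundedly_invertible_id_plus_DQ impedance_passive_closed_loop
        estimates by blast
qed

end
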